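(* Every Massouros hyperfield has the FETVINS property. That is: let $F$ be a Massouros hyperfield (as defined in the context). Then for all integers $k<n$ and every system of $k$ homogeneous linear equations over $F$ in the $n$ variables $x_1,\dots,x_n$, there exist values $x_1,\dots,x_n\in F$, not all equal to $0$, which satisfy all $k$ equations simultaneously.
   Context: A hyperaddition on a nonempty set $H$ is a map $+:H\times H\to\mathcal P^*(H)$ (nonempty subsets of $H$) that is commutative and associative, where for subsets $A,B$ one sets $A+B=\bigcup_{a\in A,b\in B}(a+b)$ and an element $x$ is identified with $\{x\}$. A hypergroup is a set with a hyperaddition having a unique $0$ with $0+h=\{h\}$ for all $h$, such that for each $x$ there is a unique $y=:-x$ with $0\in x+y$, and such that $x\in y+z$ implies $z\in x+(-y)$. A hyperfield is a set $F$ with a hyperaddition and a multiplication such that $(F,+)$ is a hypergroup, $(F,\cdot)$ is a monoid, $a(b+c)=ab+ac$, $r\cdot 0=0$ for all $r$, and $F\setminus\{0\}$ is a multiplicative group. Massouros hyperfield: let $G$ be an abelian group written multiplicatively, $H$ a group, and $\phi:G\to H$ a group homomorphism with $|\phi(G)|\ge 3$. Let $F=G\cup\{0\}$, with multiplication that of $G$ extended by $0\cdot x=x\cdot 0=0$ for all $x\in F$, and equipped with a hyperaddition making $F$ a hyperfield. $F$ is called Massouros (with respect to $\phi$) if: (1) $\phi(-x)=\phi(x)$ for all $x\in G$; (2) for all $x,y\in G$ with $\phi(x)=\phi(y)$ one has $G\setminus\phi^{-1}(\phi(x))\subseteq x+y$; (3) for all $x,y\in G$ with $\phi(x)\ne\phi(y)$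 one has $\phi^{-1}(\{\phi(x),\phi(y)\})\subseteq x+y$. A homogeneous linear equation over $F$ is a statement $a_1x_1+a_2x_2+\cdots+a_mx_m\ni 0$ with nonzero coefficients $a_i\in F$ (terms with zero coefficient are omitted); values of the variables in $F$ satisfy it if $0$ belongs to the (set-valued) sum. *)

theory Defs
  imports "HOL-Algebra.Group"
begin

definition setplus :: "('a \<Rightarrow> 'a \<Rightarrow> 'a set) \<Rightarrow> 'a set \<Rightarrow> 'a set \<Rightarrow> 'a set" where
  "setplus hadd A B = (\<Union>a\<in>A. \<Union>b\<in>B. hadd a b)"

definition hyperaddition :: "'a set \<Rightarrow> ('a \<Rightarrow> 'a \<Rightarrow> 'a set) \<Rightarrow> bool" where
  "hyperaddition R hadd \<longleftrightarrow>
     R \<noteq> {} \<and>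
     (\<forall>x\<in>R. \<forall>y\<in>R. hadd x y \<subseteq> R \<and> hadd x y \<noteq> {}) \<and>
     (\<forall>x\<in>R. \<forall>y\<in>R. hadd x y = hadd y x) \<and>
     (\<forall>x\<in>R. \<forall>y\<in>R. \<forall>z\<in>R. setplus hadd (hadd x y) {z} = setplus hadd {x} (hadd y z))"

definition hneg :: "'a set \<Rightarrow> ('a \<Rightarrow> 'a \<Rightarrow> 'a set) \<Rightarrow> 'a \<Rightarrow> 'a \<Rightarrow> 'a" where
  "hneg R hadd zero x = (THE y. y \<in> R \<and> zero \<in> hadd x y)"

definition hypergroup :: "'a set \<Rightarrow> ('a \<Rightarrow> 'a \<Rightarrow> 'a set) \<Rightarrow> 'a \<Rightarrow> bool" where
  "hypergroup R hadd zero \<longleftrightarrow>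
     hyperaddition R hadd \<and>
     zero \<in> R \<and>
     (\<forall>h\<in>R. hadd zero h = {h}) \<and>
     (\<forall>z'\<in>R. (\<forall>h\<in>R. hadd z' h = {h}) \<longrightarrow> z' = zero) \<and>
     (\<forall>x\<in>R. \<exists>!y. y \<in> R \<and> zero \<in> hadd x y) \<and>
     (\<forall>x\<in>R. \<forall>y\<in>R. \<forall>z\<in>R. x \<in> hadd y z \<longrightarrow> z \<in> hadd x (hneg R hadd zero y))"

definition mult_group :: "'a set \<Rightarrow> ('a \<Rightarrow> 'a \<Rightarrow> 'a) \<Rightarrow> 'a \<Rightarrow> 'a \<Rightarrow> 'a monoid" where
  "mult_group R hmul zero unit = \<lparr>carrier = R - {zero}, mult = hmul, one = unit\<rparr>"

definition hyperfield ::
  "'a set \<Rightarrow> ('a \<Rightarrow> 'a \<Rightarrow> 'a set) \<Rightarrow> ('a \<Rightarrow> 'a \<Rightarrow> 'a) \<Rightarrow> 'a \<Rightarrow> 'a \<Rightarrow> bool" where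
  "hyperfield R hadd hmul zero unit \<longleftrightarrow>
     hypergroup R hadd zero \<and>
     \<comment> \<open>(R, hmul) is a monoid with unit element unit\<close>
     (\<forall>x\<in>R. \<forall>y\<in>R. hmul x y \<in> R) \<and>
     (\<forall>x\<in>R. \<forall>y\<in>R. \<forall>z\<in>R. hmul (hmul x y) z = hmul x (hmul y z)) \<and>
     unit \<in> R \<and> (\<forall>x\<in>R. hmul unit x = x \<and> hmul x unit = x) \<and>
     \<comment> \<open>distributivity a(b+c) = ab + ac\<close>
     (\<forall>a\<in>R. \<forall>b\<in>R. \<forall>c\<in>R. hmul a ` hadd b c = hadd (hmul a b) (hmul a c)) \<and>
     (\<forall>r\<in>R. hmul r zero = zero) \<and>
     group (mult_group R hmul zero unit)"

definition massouros ::
  "'a set \<Rightarrow> ('a \<Rightarrow> 'a \<Rightarrow> 'a set) \<Rightarrow> ('a \<Rightarrow> 'a \<Rightarrow> 'a) \<Rightarrow> 'a \<Rightarrow> 'a \<Rightarrow>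
   ('b, 'c) monoid_scheme \<Rightarrow> ('a \<Rightarrow> 'b) \<Rightarrow> bool" where
  "massouros R hadd hmul zero unit H phi \<longleftrightarrow>
     (let G = R - {zero} in
       hyperfield R hadd hmul zero unit \<and>
       comm_group (mult_group R hmul zero unit) \<and>
       group H \<and>
       phi \<in> hom (mult_group R hmul zero unit) H \<and>
       (\<exists>a b c. a \<in> phi ` G \<and> b \<in> phi ` G \<and> c \<in> phi ` G \<and> a \<noteq> b \<and> a \<noteq> c \<and> b \<noteq> c) \<and>
       (\<forall>x\<in>R. hmul zero x = zero \<and> hmul x zero = zero) \<and>
       (\<forall>x\<in>G. phi (hneg R hadd zero x) = phi x) \<and>
       (\<forall>x\<in>G. \<forall>y\<in>G. phi x = phi y \<longrightarrow>
           G - {g\<in>G. phi g = phi x} \<subseteq> hadd x y) \<and>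
       (\<forall>x\<in>G. \<forall>y\<in>G. phi x \<noteq> phi y \<longrightarrow>
           {g\<in>G. phi g = phi x \<or> phi g = phi y} \<subseteq> hadd x y))"

fun hsum :: "('a \<Rightarrow> 'a \<Rightarrow> 'a set) \<Rightarrow> 'a \<Rightarrow> 'a list \<Rightarrow> 'a set" where
  "hsum hadd zero [] = {zero}"
| "hsum hadd zero (x # xs) = setplus hadd {x} (hsum hadd zero xs)"

definition lin_form ::
  "('a \<Rightarrow> 'a \<Rightarrow> 'a set) \<Rightarrow> ('a \<Rightarrow> 'a \<Rightarrow> 'a) \<Rightarrow> 'a \<Rightarrow> nat \<Rightarrow> (nat \<Rightarrow> 'a) \<Rightarrow> (nat \<Rightarrow> 'a) \<Rightarrow> 'a set" where
  "lin_form hadd hmul zero n a x =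
     hsum hadd zero (map (\<lambda>i. hmul (a i) (x i)) (filter (\<lambda>i. a i \<noteq> zero) [0..<n]))"

definition FETVINS ::
  "'a set \<Rightarrow> ('a \<Rightarrow> 'a \<Rightarrow> 'a set) \<Rightarrow> ('a \<Rightarrow> 'a \<Rightarrow> 'a) \<Rightarrow> 'a \<Rightarrow> bool" where
  "FETVINS R hadd hmul zero \<longleftrightarrow>
     (\<forall>k n (A :: nat \<Rightarrow> nat \<Rightarrow> 'a). k < n \<longrightarrow> (\<forall>j<k. \<forall>i<n. A j i \<in> R) \<longrightarrow>
        (\<exists>x. (\<forall>i<n. x i \<in> R) \<and> (\<exists>i<n. x i \<noteq> zero) \<and>
             (\<forall>j<k. zero \<in> lin_form hadd hmul zero n (A j) x)))"

end

theory Submission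
  imports Defs "HOL-Library.Multiset"
begin

text \<open>
  Choose a set \<open>S\<close> of variables of least size among the nonempty sets occurring in fewer
  equations than they have elements.  Minimality yields a Hall-type surplus: every nonempty set
  \<open>J\<close> of equations meeting \<open>S\<close> involves at least \<open>|J| + 1\<close> variables of \<open>S\<close>.  Under this
  condition there is a solution that is nonzero on all of \<open>S\<close> (and zero elsewhere), found by
  induction on \<open>|S|\<close>.  A variable occurring in no equation, or in only one, is dropped together
  with that equation.  If some equation does not have exactly three terms, two of its variables
  \<open>u, v\<close> are merged by \<open>x\<^sub>v = \<lambda> x\<^sub>u\<close> with \<open>\<lambda>\<close> chosen so that their two terms cancel; the
  surplus survives because \<open>u, v\<close> can be chosen such that no tight set of other equations has
  both as neighbours.  If all equations have three terms, double counting gives a variable in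
  exactly two equations, which is eliminated by combining them.  The Massouros axioms provide the
  freedom to extend solutions: a hypersum of at least two nonzero terms contains nonzero elements
  outside any prescribed fibre of \<open>\<phi>\<close>, and \<open>t + (-t)\<close> contains every element outside the
  fibre of \<open>t\<close>.
\<close>

section \<open>Hall-type surplus condition\<close>

definition hall_surplus :: "('j \<Rightarrow> 'i set) \<Rightarrow> 'j set \<Rightarrow> bool" where
  "hall_surplus N E \<longleftrightarrow> (\<forall>J\<subseteq>E. J \<noteq> {} \<longrightarrow> card J + 1 \<le> card (\<Union>(N ` J)))"

lemma hall_surplusD:
  "hall_surplus N E \<Longrightarrow> J \<subseteq> E \<Longrightarrow> J \<noteq> {} \<Longrightarrow> card J + 1 \<le> card (\<Union>(N ` J))"
  unfolding hall_surplus_def by blast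

lemma hall_surplus_finite_UN:
  "hall_surplus N E \<Longrightarrow> J \<subseteq> E \<Longrightarrow> J \<noteq> {} \<Longrightarrow> finite (\<Union>(N ` J))"
proof -
  assume "hall_surplus N E" "J \<subseteq> E" "J \<noteq> {}"
  then have "card J + 1 \<le> card (\<Union>(N ` J))" by (rule hall_surplusD)
  then show ?thesis by (cases "finite (\<Union>(N ` J))") auto
qed

lemma hall_surplus_subset: "hall_surplus N E \<Longrightarrow> E' \<subseteq> E \<Longrightarrow> hall_surplus N E'"
  unfolding hall_surplus_def by blast

lemma hall_surplus_cong:
  assumes "\<And>j. j \<in> E \<Longrightarrow> N' j = N j" and "hall_surplus N E"
  shows "hall_surplus N' E"
proof -
  have "\<Union>(N' ` J) = \<Union>(N ` J)" if "J \<subseteq> E" for J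
    using assms(1) that by (metis image_cong subsetD)
  then show ?thesis using assms(2) unfolding hall_surplus_def by simp
qed

lemma hall_surplus_card_ge_2: "hall_surplus N E \<Longrightarrow> e \<in> E \<Longrightarrow> 2 \<le> card (N e)"
  using hall_surplusD[of N E "{e}"] by simp

text \<open>A set \<open>J\<close> of rows is tight if \<open>|N(J)| \<le> |J| + 1\<close>.  By submodularity of \<open>J \<mapsto> |N(J)|\<close>, two
  tight sets with a common neighbour have a tight union.\<close>
lemma hall_surplus_tight_Un:
  assumes hall: "hall_surplus N E"
    and J1: "J1 \<subseteq> E" "finite J1" "card (\<Union>(N ` J1)) \<le> card J1 + 1"
    and J2: "J2 \<subseteq> E" "finite J2" "card (\<Union>(N ` J2)) \<le> card J2 + 1"
    and u: "u \<in> \<Union>(N ` J1)" "u \<in> \<Union>(N ` J2)"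
  shows "card (\<Union>(N ` (J1 \<union> J2))) \<le> card (J1 \<union> J2) + 1"
proof -
  have fin1: "finite (\<Union>(N ` J1))" and fin2: "finite (\<Union>(N ` J2))"
    using hall_surplus_finite_UN[OF hall J1(1)] hall_surplus_finite_UN[OF hall J2(1)] u by auto
  have Un: "\<Union>(N ` (J1 \<union> J2)) = \<Union>(N ` J1) \<union> \<Union>(N ` J2)" by auto
  have "card (J1 \<inter> J2) + 1 \<le> card (\<Union>(N ` J1) \<inter> \<Union>(N ` J2))"
  proof (cases "J1 \<inter> J2 = {}")
    case True
    have "card (\<Union>(N ` J1) \<inter> \<Union>(N ` J2)) \<noteq> 0" using u fin1 by auto
    then show ?thesis using True by simp
  next
    case False
    then have "card (J1 \<inter> J2) + 1 \<le> card (\<Union>(N ` (J1 \<inter> J2)))"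
      using J1(1) by (intro hall_surplusD[OF hall]) auto
    also have "\<dots> \<le> card (\<Union>(N ` J1) \<inter> \<Union>(N ` J2))"
      using fin1 by (intro card_mono) auto
    finally show ?thesis .
  qed
  then show ?thesis
    unfolding Un using card_Un_Int[OF fin1 fin2] card_Un_Int[OF J1(2) J2(2)] J1(3) J2(3)
    by linarith
qed

lemma hall_surplus_tight_UN:
  assumes hall: "hall_surplus N E" and V: "finite V" "V \<noteq> {}"
    and tight: "\<And>v. v \<in> V \<Longrightarrow> J v \<subseteq> E \<and> finite (J v) \<and> u \<in> \<Union>(N ` J v) \<and>
                    card (\<Union>(N ` J v)) \<le> card (J v) + 1"
  shows "card (\<Union>(N ` \<Union>(J ` V))) \<le> card (\<Union>(J ` V)) + 1"
  using V tight
proof (induction V rule: finite_ne_induct)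
  case (singleton v)
  then show ?case by simp
next
  case (insert v V)
  have Jv: "J v \<subseteq> E" "finite (J v)" "u \<in> \<Union>(N ` J v)" "card (\<Union>(N ` J v)) \<le> card (J v) + 1"
    using insert.prems by auto
  have IH: "card (\<Union>(N ` \<Union>(J ` V))) \<le> card (\<Union>(J ` V)) + 1"
    by (intro insert.IH insert.prems) simp
  obtain v' where "v' \<in> V" using insert.hyps(2) by blast
  then have uV: "u \<in> \<Union>(N ` \<Union>(J ` V))" using insert.prems by blast
  have sub: "\<Union>(J ` V) \<subseteq> E" using insert.prems by blast
  have fin: "finite (\<Union>(J ` V))" by (intro finite_UN_I insert.hyps(1)) (simp add: insert.prems)
  have "\<Union>(J ` insert v V) = J v \<union> \<Union>(J ` V)" by simp
  then show ?case using hall_surplus_tight_Un[OF hall Jv(1,2,4) sub fin IH Jv(3) uV] by simp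
qed

lemma hall_surplus_tight_not_covering:
  assumes hall: "hall_surplus N E" and e: "e \<in> E" and J: "J \<subseteq> E - {e}" "finite J"
    and tight: "card (\<Union>(N ` J)) \<le> card J + 1"
  shows "\<not> N e \<subseteq> \<Union>(N ` J)"
proof
  assume "N e \<subseteq> \<Union>(N ` J)"
  then have "\<Union>(N ` insert e J) = \<Union>(N ` J)" by auto
  moreover have "card (insert e J) + 1 \<le> card (\<Union>(N ` insert e J))"
    using J e by (intro hall_surplusD[OF hall]) auto
  moreover have "e \<notin> J" using J(1) by blast
  ultimately show False using tight J(2) by simp
qed

text \<open>If every \<open>v \<in> N e - {u}\<close> shared with \<open>u\<close> the neighbourhood of a tight set \<open>J v\<close> of other
  rows, the union of the \<open>J v\<close> would be tight and would cover \<open>N e\<close>.\<close>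
lemma hall_surplus_exists_partner:
  assumes hall: "hall_surplus N E" and fin: "finite E" and e: "e \<in> E" and u: "u \<in> N e"
  shows "\<exists>v\<in>N e - {u}. \<forall>J. J \<subseteq> E - {e} \<longrightarrow> u \<in> \<Union>(N ` J) \<longrightarrow> v \<in> \<Union>(N ` J) \<longrightarrow>
           card J + 2 \<le> card (\<Union>(N ` J))"
proof (rule ccontr)
  define V where "V = N e - {u}"
  have card_Ne: "2 \<le> card (N e)" using hall_surplus_card_ge_2[OF hall e] .
  have V: "finite V" "V \<noteq> {}"
  proof -
    have "finite (N e)" using card_Ne by (rule_tac ccontr) simp
    then show "finite V" unfolding V_def by simp
    show "V \<noteq> {}"
    proof
      assume "V = {}"
      then have "N e \<subseteq> {u}" unfolding V_def by blast
      then show False using card_Ne card_mono[of "{u}" "N e"] by simp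
    qed
  qed
  assume "\<not> ?thesis"
  then have "\<forall>v\<in>V. \<exists>J. J \<subseteq> E - {e} \<and> u \<in> \<Union>(N ` J) \<and> v \<in> \<Union>(N ` J) \<and>
      \<not> card J + 2 \<le> card (\<Union>(N ` J))" unfolding V_def bex_simps(8) not_all not_imp .
  from bchoice[OF this] obtain J where J: "\<forall>v\<in>V. J v \<subseteq> E - {e} \<and>
      u \<in> \<Union>(N ` J v) \<and> v \<in> \<Union>(N ` J v) \<and> \<not> card (J v) + 2 \<le> card (\<Union>(N ` J v))"
    by blast
  define J0 where "J0 = \<Union>(J ` V)"
  have J0: "J0 \<subseteq> E - {e}" using J unfolding J0_def by blast
  have "finite J0" using J0 fin by (meson Diff_subset finite_subset)
  have tight: "card (\<Union>(N ` J0)) \<le> card J0 + 1"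
    unfolding J0_def
  proof (rule hall_surplus_tight_UN[OF hall V])
    fix v assume "v \<in> V"
    then have "J v \<subseteq> E" "u \<in> \<Union>(N ` J v)" "\<not> card (J v) + 2 \<le> card (\<Union>(N ` J v))"
      using J by blast+
    moreover have "finite (J v)" using \<open>J v \<subseteq> E\<close> fin by (rule finite_subset)
    ultimately show "J v \<subseteq> E \<and> finite (J v) \<and> u \<in> \<Union>(N ` J v) \<and> card (\<Union>(N ` J v)) \<le> card (J v) + 1"
      by simp
  qed
  have "N e \<subseteq> \<Union>(N ` J0)"
  proof
    fix x assume "x \<in> N e"
    show "x \<in> \<Union>(N ` J0)"
    proof (cases "x = u")
      case True
      obtain v where "v \<in> V" using V(2) by blast
      then show ?thesis using J True unfolding J0_def by blast
    next
      case False
      then have "x \<in> V" using \<open>x \<in> N e\<close> unfolding V_def by blast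
      then show ?thesis using J unfolding J0_def by blast
    qed
  qed
  then show False using hall_surplus_tight_not_covering[OF hall e J0 \<open>finite J0\<close> tight] by blast
qed

lemma hall_surplus_obtain_pair:
  assumes hall: "hall_surplus N E" and fin: "finite E" and e: "e \<in> E"
  obtains u v where "u \<in> N e" "v \<in> N e" "u \<noteq> v"
    "\<And>J. J \<subseteq> E - {e} \<Longrightarrow> u \<in> \<Union>(N ` J) \<Longrightarrow> v \<in> \<Union>(N ` J) \<Longrightarrow>
       card J + 2 \<le> card (\<Union>(N ` J))"
proof -
  have "N e \<noteq> {}" using hall_surplus_card_ge_2[OF hall e] by auto
  then obtain u where u: "u \<in> N e" by blast
  then obtain v where "v \<in> N e - {u}" and pair: "\<forall>J. J \<subseteq> E - {e} \<longrightarrow> u \<in> \<Union>(N ` J) \<longrightarrow>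
      v \<in> \<Union>(N ` J) \<longrightarrow> card J + 2 \<le> card (\<Union>(N ` J))"
    using hall_surplus_exists_partner[OF hall fin e] by blast
  then show thesis by (intro that[OF u, of v]) blast+
qed

text \<open>Merging column \<open>v\<close> into column \<open>u\<close> loses at most one neighbour of any set of rows, and
  loses one only if both \<open>u\<close> and \<open>v\<close> are neighbours.\<close>
lemma hall_surplus_merge:
  assumes hall: "hall_surplus N E" and uv: "u \<noteq> v"
    and pair: "\<And>J. J \<subseteq> E \<Longrightarrow> u \<in> \<Union>(N ` J) \<Longrightarrow> v \<in> \<Union>(N ` J) \<Longrightarrow>
                 card J + 2 \<le> card (\<Union>(N ` J))"
  shows "hall_surplus (\<lambda>j. N j - {v} \<union> (if v \<in> N j then {u} else {})) E"
  unfolding hall_surplus_def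
proof (intro allI impI)
  fix J assume J: "J \<subseteq> E" "J \<noteq> {}"
  let ?NJ = "\<Union>(N ` J)"
  have fin: "finite ?NJ" and surplus: "card J + 1 \<le> card ?NJ"
    using J hall_surplus_finite_UN[OF hall] hall_surplusD[OF hall] by auto
  have "card J + 1 \<le> card (?NJ - {v} \<union> (if v \<in> ?NJ then {u} else {}))"
  proof (cases "v \<in> ?NJ")
    case v: True
    show ?thesis
    proof (cases "u \<in> ?NJ")
      case True
      then have "card J + 2 \<le> card ?NJ" using pair J v by blast
      moreover have "?NJ - {v} \<union> {u} = ?NJ - {v}" using True uv by blast
      ultimately show ?thesis using v fin by (simp add: card_Diff_singleton)
    next
      case False
      then have "card (insert u (?NJ - {v})) = card ?NJ"
        using card_Suc_Diff1[OF fin v] fin by (simp del: card_Diff_singleton)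
      then show ?thesis using v surplus by simp
    qed
  qed (use surplus in simp)
  moreover have "(\<Union>j\<in>J. N j - {v} \<union> (if v \<in> N j then {u} else {})) =
      ?NJ - {v} \<union> (if v \<in> ?NJ then {u} else {})"
    using uv by (auto split: if_split_asm)
  ultimately show "card J + 1 \<le> card (\<Union>j\<in>J. N j - {v} \<union> (if v \<in> N j then {u} else {}))"
    by simp
qed

lemma hall_surplus_exists_low_degree:
  assumes hall: "hall_surplus N E" and fin: "finite S" "finite E" "E \<noteq> {}"
    and rows: "\<And>j. j \<in> E \<Longrightarrow> N j \<subseteq> S \<and> card (N j) = 3"
  shows "\<exists>w\<in>S. card {j\<in>E. w \<in> N j} < 3"
proof (rule ccontr)
  assume "\<not> ?thesis"
  then have "(\<Sum>w\<in>S. 3) \<le> (\<Sum>w\<in>S. card {j\<in>E. w \<in> N j})"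
    by (intro sum_mono) (simp add: not_less)
  then have "3 * card S \<le> (\<Sum>w\<in>S. card {j\<in>E. w \<in> N j})" by simp
  also have "\<dots> = 3 * card E"
  proof (rule sum_multicount[OF fin(1,2)], intro ballI)
    fix j assume "j \<in> E"
    then have "{w\<in>S. w \<in> N j} = N j" using rows by blast
    then show "card {w\<in>S. w \<in> N j} = 3" using rows \<open>j \<in> E\<close> by simp
  qed
  finally have "card S \<le> card E" by simp
  moreover have "card E + 1 \<le> card (\<Union>(N ` E))" using hall_surplusD[OF hall] fin by blast
  moreover have "card (\<Union>(N ` E)) \<le> card S" using rows fin by (intro card_mono) auto
  ultimately show False by simp
qed

lemma hall_surplus_if_minimal:
  assumes fin: "finite S" "finite K" and less: "card {j\<in>K. N j \<inter> S \<noteq> {}} < card S"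
    and minimal: "\<And>S'. S' \<subset> S \<Longrightarrow> S' \<noteq> {} \<Longrightarrow> card S' \<le> card {j\<in>K. N j \<inter> S' \<noteq> {}}"
  shows "hall_surplus (\<lambda>j. N j \<inter> S) {j\<in>K. N j \<inter> S \<noteq> {}}"
  unfolding hall_surplus_def
proof (intro allI impI)
  let ?rows = "\<lambda>T. {j\<in>K. N j \<inter> T \<noteq> {}}"
  fix J assume J: "J \<subseteq> ?rows S" "J \<noteq> {}"
  define M where "M = (\<Union>j\<in>J. N j \<inter> S)"
  have fin_rows: "finite (?rows T)" for T using fin(2) by simp
  have M: "M \<subseteq> S" "finite M" using fin(1) finite_subset[of M S] unfolding M_def by auto
  have cJ: "card J \<le> card (?rows S)" using J fin_rows by (intro card_mono) auto
  show "card J + 1 \<le> card M"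
  proof (cases "M = S")
    case True
    then show ?thesis using cJ less by simp
  next
    case False
    have "M \<noteq> {}" using J unfolding M_def by blast
    then have "card (S - M) \<le> card (?rows (S - M))" using False M by (intro minimal) auto
    also have "\<dots> \<le> card (?rows S - J)"
      using fin_rows by (intro card_mono) (auto simp: M_def)
    also have "\<dots> = card (?rows S) - card J"
      using J fin_rows finite_subset[OF J(1)] by (intro card_Diff_subset) auto
    finally show ?thesis
      using card_Diff_subset[OF M(2,1)] card_mono[OF fin(1) M(1)] cJ less by linarith
  qed
qed

lemma obtain_hall_surplus_restriction:
  fixes N :: "'j \<Rightarrow> 'i set"
  assumes fin: "finite C" "finite K" and less: "card K < card C"
  obtains S where "S \<subseteq> C" "S \<noteq> {}" "hall_surplus (\<lambda>j. N j \<inter> S) {j\<in>K. N j \<inter> S \<noteq> {}}"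
proof -
  define P where "P S \<longleftrightarrow> S \<subseteq> C \<and> S \<noteq> {} \<and> card {j\<in>K. N j \<inter> S \<noteq> {}} < card S" for S
  have "card {j\<in>K. N j \<inter> C \<noteq> {}} \<le> card K" using fin(2) by (intro card_mono) auto
  then have "P C" using less unfolding P_def by auto
  then obtain S where PS: "P S" and least: "\<And>S'. P S' \<Longrightarrow> card S \<le> card S'"
    using ex_has_least_nat[of P C card] by blast
  have S: "S \<subseteq> C" "S \<noteq> {}" "finite S" using PS finite_subset[OF _ fin(1)] unfolding P_def by auto
  have "hall_surplus (\<lambda>j. N j \<inter> S) {j\<in>K. N j \<inter> S \<noteq> {}}"
  proof (rule hall_surplus_if_minimal[OF S(3) fin(2)])
    show "card {j\<in>K. N j \<inter> S \<noteq> {}} < card S" using PS unfolding P_def by blast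
    fix S' assume "S' \<subset> S" "S' \<noteq> {}"
    moreover from this have "card S' < card S" using S(3) by (intro psubset_card_mono)
    ultimately show "card S' \<le> card {j\<in>K. N j \<inter> S' \<noteq> {}}"
      using least[of S'] S(1) unfolding P_def by fastforce
  qed
  then show thesis using that S by blast
qed

section \<open>Hypersums in a hypergroup\<close>

lemma mset_sorted_list_of_set: "mset (sorted_list_of_set A) = mset_set A"
  by (metis mset_sorted_list_of_multiset sorted_list_of_mset_set)

locale additive_hypergroup =
  fixes R :: "'a set" and hadd :: "'a \<Rightarrow> 'a \<Rightarrow> 'a set" and zero :: 'a
  assumes hypergroup: "hypergroup R hadd zero"
begin

abbreviation set_hadd :: "'a set \<Rightarrow> 'a set \<Rightarrow> 'a set"  (infixl "\<boxplus>" 65)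
  where "X \<boxplus> Y \<equiv> setplus hadd X Y"

abbreviation neg :: "'a \<Rightarrow> 'a" where "neg \<equiv> hneg R hadd zero"

lemma hyperaddition: "hyperaddition R hadd"
  using hypergroup unfolding hypergroup_def by (elim conjE)

lemma add_closed: "x \<in> R \<Longrightarrow> y \<in> R \<Longrightarrow> hadd x y \<subseteq> R"
  using hyperaddition unfolding hyperaddition_def by (elim conjE) blast

lemma add_commute: "x \<in> R \<Longrightarrow> y \<in> R \<Longrightarrow> hadd x y = hadd y x"
  using hyperaddition unfolding hyperaddition_def by (elim conjE) blast

lemma add_assoc: "x \<in> R \<Longrightarrow> y \<in> R \<Longrightarrow> z \<in> R \<Longrightarrow> hadd x y \<boxplus> {z} = {x} \<boxplus> hadd y z"
  using hyperaddition unfolding hyperaddition_def by (elim conjE) blast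

lemma zero_closed [simp]: "zero \<in> R"
  using hypergroup unfolding hypergroup_def by (elim conjE)

lemma zero_add [simp]: "x \<in> R \<Longrightarrow> hadd zero x = {x}"
  using hypergroup unfolding hypergroup_def by (elim conjE) blast

lemma add_zero [simp]: "x \<in> R \<Longrightarrow> hadd x zero = {x}"
  using add_commute[of x zero] by simp

lemma neg_ex1: "x \<in> R \<Longrightarrow> \<exists>!y. y \<in> R \<and> zero \<in> hadd x y"
  using hypergroup unfolding hypergroup_def by (elim conjE) blast

lemma neg_closed [simp]: "x \<in> R \<Longrightarrow> neg x \<in> R"
  and zero_in_add_neg: "x \<in> R \<Longrightarrow> zero \<in> hadd x (neg x)"
  unfolding hneg_def by (drule theI'[OF neg_ex1], simp)+

lemma zero_in_neg_add: "x \<in> R \<Longrightarrow> zero \<in> hadd (neg x) x"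
  using zero_in_add_neg[of x] add_commute[of x "neg x"] by simp

lemma neg_unique: "x \<in> R \<Longrightarrow> y \<in> R \<Longrightarrow> zero \<in> hadd x y \<Longrightarrow> y = neg x"
  using neg_ex1[of x] zero_in_add_neg[of x] neg_closed[of x] by blast

lemma neg_neg [simp]: "x \<in> R \<Longrightarrow> neg (neg x) = x"
  using neg_unique[of "neg x" x] zero_in_neg_add by simp

lemma neg_zero [simp]: "neg zero = zero"
  using neg_unique[of zero zero] by simp

lemma neg_eq_zero_iff [simp]: "x \<in> R \<Longrightarrow> neg x = zero \<longleftrightarrow> x = zero"
  by (metis neg_neg neg_zero)

lemma set_hadd_singletons [simp]: "{x} \<boxplus> {y} = hadd x y"
  unfolding setplus_def by simp

lemma set_hadd_closed: "X \<subseteq> R \<Longrightarrow> Y \<subseteq> R \<Longrightarrow> X \<boxplus> Y \<subseteq> R"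
  unfolding setplus_def using add_closed by (meson UN_least subsetD)

lemma set_hadd_mono: "X \<subseteq> X' \<Longrightarrow> Y \<subseteq> Y' \<Longrightarrow> X \<boxplus> Y \<subseteq> X' \<boxplus> Y'"
  unfolding setplus_def by blast

lemma set_hadd_commute:
  assumes "X \<subseteq> R" "Y \<subseteq> R"
  shows "X \<boxplus> Y = Y \<boxplus> X"
proof -
  have "\<And>x y. x \<in> X \<Longrightarrow> y \<in> Y \<Longrightarrow> hadd x y = hadd y x" using assms add_commute by blast
  then show ?thesis unfolding setplus_def by blast
qed

lemma zero_set_hadd [simp]:
  assumes "X \<subseteq> R"
  shows "{zero} \<boxplus> X = X"
proof -
  have "\<And>x. x \<in> X \<Longrightarrow> hadd zero x = {x}" using assms by auto
  then show ?thesis unfolding setplus_def by simp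
qed

lemma set_hadd_zero [simp]: "X \<subseteq> R \<Longrightarrow> X \<boxplus> {zero} = X"
  using set_hadd_commute[of X "{zero}"] by simp

lemma set_hadd_assoc:
  assumes "X \<subseteq> R" "Y \<subseteq> R" "Z \<subseteq> R"
  shows "X \<boxplus> Y \<boxplus> Z = X \<boxplus> (Y \<boxplus> Z)"
proof -
  have "X \<boxplus> Y \<boxplus> Z = (\<Union>x\<in>X. \<Union>y\<in>Y. \<Union>z\<in>Z. hadd x y \<boxplus> {z})"
    unfolding setplus_def by blast
  also have "\<dots> = (\<Union>x\<in>X. \<Union>y\<in>Y. \<Union>z\<in>Z. {x} \<boxplus> hadd y z)"
  proof (intro SUP_cong refl)
    fix x y z assume "x \<in> X" "y \<in> Y" "z \<in> Z"
    then show "hadd x y \<boxplus> {z} = {x} \<boxplus> hadd y z" using assms by (intro add_assoc) auto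
  qed
  also have "\<dots> = X \<boxplus> (Y \<boxplus> Z)"
    unfolding setplus_def by blast
  finally show ?thesis .
qed

lemma set_hadd_left_commute:
  assumes "X \<subseteq> R" "Y \<subseteq> R" "Z \<subseteq> R"
  shows "X \<boxplus> (Y \<boxplus> Z) = Y \<boxplus> (X \<boxplus> Z)"
proof -
  have "X \<boxplus> (Y \<boxplus> Z) = X \<boxplus> Y \<boxplus> Z" using assms by (simp add: set_hadd_assoc)
  also have "\<dots> = Y \<boxplus> X \<boxplus> Z" using assms by (simp add: set_hadd_commute)
  also have "\<dots> = Y \<boxplus> (X \<boxplus> Z)" using assms by (simp add: set_hadd_assoc)
  finally show ?thesis .
qed

lemma set_hadd_swap_middle:
  assumes "W \<subseteq> R" "X \<subseteq> R" "Y \<subseteq> R" "Z \<subseteq> R"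
  shows "W \<boxplus> X \<boxplus> (Y \<boxplus> Z) = W \<boxplus> Y \<boxplus> (X \<boxplus> Z)"
proof -
  have "W \<boxplus> X \<boxplus> (Y \<boxplus> Z) = W \<boxplus> (X \<boxplus> (Y \<boxplus> Z))"
    using assms set_hadd_closed by (simp add: set_hadd_assoc)
  also have "X \<boxplus> (Y \<boxplus> Z) = Y \<boxplus> (X \<boxplus> Z)" using assms(2-4) by (rule set_hadd_left_commute)
  also have "W \<boxplus> (Y \<boxplus> (X \<boxplus> Z)) = W \<boxplus> Y \<boxplus> (X \<boxplus> Z)"
    using assms set_hadd_closed by (simp add: set_hadd_assoc)
  finally show ?thesis .
qed

lemma hsum_closed: "set xs \<subseteq> R \<Longrightarrow> hsum hadd zero xs \<subseteq> R"
  by (induction xs) (simp_all add: set_hadd_closed)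

lemma hsum_append:
  "set xs \<subseteq> R \<Longrightarrow> set ys \<subseteq> R \<Longrightarrow>
   hsum hadd zero (xs @ ys) = hsum hadd zero xs \<boxplus> hsum hadd zero ys"
  by (induction xs) (simp_all add: set_hadd_assoc hsum_closed)

lemma hsum_perm:
  "mset xs = mset ys \<Longrightarrow> set xs \<subseteq> R \<Longrightarrow> hsum hadd zero xs = hsum hadd zero ys"
proof (induction xs arbitrary: ys)
  case Nil
  then show ?case by simp
next
  case (Cons a xs)
  then have "a \<in> set ys" by (metis list.set_intros(1) set_mset_mset)
  then obtain ys1 ys2 where ys: "ys = ys1 @ a # ys2" by (meson split_list)
  then have perm: "mset xs = mset (ys1 @ ys2)" using Cons.prems(1) by simp
  have R: "a \<in> R" "set ys1 \<subseteq> R" "set ys2 \<subseteq> R" "set xs \<subseteq> R"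
    using Cons.prems mset_eq_setD[OF Cons.prems(1)] ys by auto
  have "hsum hadd zero ys = hsum hadd zero ys1 \<boxplus> ({a} \<boxplus> hsum hadd zero ys2)"
    using R ys by (simp add: hsum_append)
  also have "\<dots> = {a} \<boxplus> hsum hadd zero (ys1 @ ys2)"
    using R by (simp add: set_hadd_left_commute hsum_closed hsum_append)
  also have "\<dots> = hsum hadd zero (a # xs)"
    using Cons.IH[OF perm] R by simp
  finally show ?case by simp
qed

text \<open>Indices are summed in increasing order; by \<open>hsum_perm\<close> the order is irrelevant.\<close>
definition hsum_set :: "('i::linorder \<Rightarrow> 'a) \<Rightarrow> 'i set \<Rightarrow> 'a set" where
  "hsum_set f I = hsum hadd zero (map f (sorted_list_of_set I))"

lemma hsum_set_closed: "f ` I \<subseteq> R \<Longrightarrow> hsum_set f I \<subseteq> R"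
  unfolding hsum_set_def by (cases "finite I") (auto intro!: hsum_closed)

lemma hsum_set_empty [simp]: "hsum_set f {} = {zero}"
  unfolding hsum_set_def by simp

lemma hsum_eq_hsum_set:
  "distinct xs \<Longrightarrow> f ` set xs \<subseteq> R \<Longrightarrow> hsum hadd zero (map f xs) = hsum_set f (set xs)"
  unfolding hsum_set_def
  by (rule hsum_perm) (auto simp: mset_set_set mset_sorted_list_of_set)

lemma hsum_set_insert:
  assumes "finite I" "i \<notin> I" "f ` insert i I \<subseteq> R"
  shows "hsum_set f (insert i I) = {f i} \<boxplus> hsum_set f I"
proof -
  have "hsum_set f (insert i I) = hsum hadd zero (map f (i # sorted_list_of_set I))"
    unfolding hsum_set_def using assms
    by (intro hsum_perm) (auto simp: set_insort_key)
  then show ?thesis unfolding hsum_set_def by simp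
qed

lemma hsum_set_cong:
  "finite I \<Longrightarrow> (\<And>i. i \<in> I \<Longrightarrow> f i = g i) \<Longrightarrow> hsum_set f I = hsum_set g I"
  unfolding hsum_set_def by (metis map_eq_conv set_sorted_list_of_set)

lemma hsum_set_singleton [simp]: "f i \<in> R \<Longrightarrow> hsum_set f {i} = {f i}"
  using hsum_set_insert[of "{}" i f] by simp

lemma hsum_set_doubleton:
  "i \<noteq> j \<Longrightarrow> f i \<in> R \<Longrightarrow> f j \<in> R \<Longrightarrow> hsum_set f {i, j} = hadd (f i) (f j)"
  using hsum_set_insert[of "{j}" i f] by simp

lemma hsum_set_Un:
  assumes "finite I" "finite J" "I \<inter> J = {}" "f ` (I \<union> J) \<subseteq> R"
  shows "hsum_set f (I \<union> J) = hsum_set f I \<boxplus> hsum_set f J"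
  using assms
proof (induction I rule: finite_induct)
  case empty
  then show ?case by (simp add: hsum_set_closed)
next
  case (insert i I)
  have R: "f i \<in> R" "hsum_set f I \<subseteq> R" "hsum_set f J \<subseteq> R"
    using insert.prems by (auto intro!: hsum_set_closed)
  have "hsum_set f (insert i I \<union> J) = {f i} \<boxplus> hsum_set f (I \<union> J)"
    using insert by (simp add: hsum_set_insert)
  also have "\<dots> = {f i} \<boxplus> hsum_set f I \<boxplus> hsum_set f J"
    using insert R by (simp add: set_hadd_assoc)
  also have "{f i} \<boxplus> hsum_set f I = hsum_set f (insert i I)"
    using insert.hyps insert.prems by (intro hsum_set_insert[symmetric]) auto
  finally show ?case .
qed

lemma hsum_set_all_zero: "finite I \<Longrightarrow> (\<And>i. i \<in> I \<Longrightarrow> f i = zero) \<Longrightarrow> hsum_set f I = {zero}"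
proof (induction I rule: finite_induct)
  case (insert i I)
  then have "f ` insert i I \<subseteq> R" by auto
  then show ?case using insert by (simp add: hsum_set_insert)
qed simp

lemma hsum_set_mono_neutral:
  assumes "finite J" "I \<subseteq> J" "\<And>i. i \<in> J - I \<Longrightarrow> f i = zero" "f ` J \<subseteq> R"
  shows "hsum_set f J = hsum_set f I"
proof -
  have "hsum_set f J = hsum_set f I \<boxplus> hsum_set f (J - I)"
    using assms hsum_set_Un[of I "J - I" f] finite_subset[OF assms(2,1)]
    by (simp add: Un_absorb1)
  also have "hsum_set f (J - I) = {zero}" using assms by (intro hsum_set_all_zero) auto
  moreover have "hsum_set f I \<subseteq> R" using assms by (intro hsum_set_closed) auto
  ultimately show ?thesis by simp
qed

lemma hsum_set_subset_set_hadd: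
  assumes "finite I" "\<And>i. i \<in> I \<Longrightarrow> p i \<in> R \<and> q i \<in> R \<and> f i \<in> hadd (p i) (q i)"
  shows "hsum_set f I \<subseteq> hsum_set p I \<boxplus> hsum_set q I"
  using assms
proof (induction I rule: finite_induct)
  case empty
  then show ?case by simp
next
  case (insert i I)
  have R: "f ` insert i I \<subseteq> R" "p ` insert i I \<subseteq> R" "q ` insert i I \<subseteq> R"
    using insert.prems add_closed by blast+
  have "hsum_set f (insert i I) = {f i} \<boxplus> hsum_set f I"
    using insert R by (simp add: hsum_set_insert)
  also have "\<dots> \<subseteq> {p i} \<boxplus> {q i} \<boxplus> (hsum_set p I \<boxplus> hsum_set q I)"
    using insert by (intro set_hadd_mono) auto
  also have "\<dots> = {p i} \<boxplus> hsum_set p I \<boxplus> ({q i} \<boxplus> hsum_set q I)"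
    using R by (intro set_hadd_swap_middle hsum_set_closed) auto
  also have "\<dots> = hsum_set p (insert i I) \<boxplus> hsum_set q (insert i I)"
    using insert R by (simp add: hsum_set_insert)
  finally show ?case .
qed

end

section \<open>Homogeneous linear systems over a commutative hyperfield\<close>

text \<open>The hyperfield axioms only give \<open>x \<cdot> 0 = 0\<close>; \<open>0 \<cdot> x = 0\<close> is assumed separately, as in the
  definition of Massouros hyperfields.\<close>
locale comm_hyperfield = additive_hypergroup R hadd zero
  for R :: "'a set" and hadd and zero +
  fixes hmul :: "'a \<Rightarrow> 'a \<Rightarrow> 'a" and unit :: 'a
  assumes hyperfield: "hyperfield R hadd hmul zero unit"
    and mult_comm_group: "comm_group (mult_group R hmul zero unit)"
    and zero_mul [simp]: "x \<in> R \<Longrightarrow> hmul zero x = zero"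
begin

abbreviation G :: "'a set" where "G \<equiv> R - {zero}"

sublocale mult: comm_group "mult_group R hmul zero unit"
  by (rule mult_comm_group)

lemma mult_group_simps [simp]:
  "carrier (mult_group R hmul zero unit) = G"
  "monoid.mult (mult_group R hmul zero unit) = hmul"
  "one (mult_group R hmul zero unit) = unit"
  unfolding mult_group_def by simp_all

lemma mul_closed [simp]: "x \<in> R \<Longrightarrow> y \<in> R \<Longrightarrow> hmul x y \<in> R"
  using hyperfield unfolding hyperfield_def by (elim conjE) blast

lemma mul_assoc: "x \<in> R \<Longrightarrow> y \<in> R \<Longrightarrow> z \<in> R \<Longrightarrow> hmul (hmul x y) z = hmul x (hmul y z)"
  using hyperfield unfolding hyperfield_def by (elim conjE) blast

lemma unit_mul [simp]: "x \<in> R \<Longrightarrow> hmul unit x = x"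
  using hyperfield unfolding hyperfield_def by (elim conjE) blast

lemma mul_distrib: "a \<in> R \<Longrightarrow> b \<in> R \<Longrightarrow> c \<in> R \<Longrightarrow> hmul a ` hadd b c = hadd (hmul a b) (hmul a c)"
  using hyperfield unfolding hyperfield_def by (elim conjE) blast

lemma mul_zero [simp]: "x \<in> R \<Longrightarrow> hmul x zero = zero"
  using hyperfield unfolding hyperfield_def by (elim conjE) blast

lemma unit_closed [simp]: "unit \<in> R"
  using hyperfield unfolding hyperfield_def by (elim conjE)

lemma mul_nonzero: "x \<in> G \<Longrightarrow> y \<in> G \<Longrightarrow> hmul x y \<in> G"
  using mult.m_closed[of x y] by simp

lemma unit_nonzero [simp]: "unit \<in> G"
  using mult.one_closed by simp

lemma mul_commute: "x \<in> R \<Longrightarrow> y \<in> R \<Longrightarrow> hmul x y = hmul y x"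
  using mult.m_comm[of x y] by (cases "x = zero \<or> y = zero") auto

lemma mul_eq_zero_iff: "x \<in> R \<Longrightarrow> y \<in> R \<Longrightarrow> hmul x y = zero \<longleftrightarrow> x = zero \<or> y = zero"
  using mul_nonzero[of x y] by auto

lemma exists_mul_eq:
  assumes "a \<in> G" "b \<in> G"
  shows "\<exists>x\<in>G. hmul a x = b"
proof -
  let ?a' = "inv\<^bsub>mult_group R hmul zero unit\<^esub> a"
  have a': "?a' \<in> G" "hmul a ?a' = unit" using assms(1) mult.inv_closed mult.r_inv by simp_all
  then have "hmul ?a' b \<in> G" using assms(2) by (rule_tac mul_nonzero)
  moreover have "hmul a (hmul ?a' b) = b" using a' assms mul_assoc[of a ?a' b] by simp
  ultimately show ?thesis by blast
qed

lemma mul_left_cancel: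
  assumes "a \<in> G" "b \<in> R" "c \<in> R" "hmul a b = hmul a c"
  shows "b = c"
proof -
  obtain a' where a': "a' \<in> G" "hmul a a' = unit" using exists_mul_eq[OF assms(1) unit_nonzero] by blast
  then have "hmul a' a = unit" using assms(1) mul_commute by simp
  then have "b = hmul (hmul a' a) b" "c = hmul (hmul a' a) c" using assms by simp_all
  then show ?thesis using a' assms mul_assoc by simp
qed

lemma mul_neg: "a \<in> R \<Longrightarrow> b \<in> R \<Longrightarrow> hmul a (neg b) = neg (hmul a b)"
proof -
  assume ab: "a \<in> R" "b \<in> R"
  have "hmul a zero \<in> hmul a ` hadd b (neg b)" using zero_in_add_neg[OF ab(2)] by blast
  then have "zero \<in> hadd (hmul a b) (hmul a (neg b))" using ab mul_distrib[of a b "neg b"] by simp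
  then show ?thesis using ab by (intro neg_unique) auto
qed

lemma neg_mul: "a \<in> R \<Longrightarrow> b \<in> R \<Longrightarrow> hmul (neg a) b = neg (hmul a b)"
  using mul_neg[of b a] mul_commute by simp

lemma neg_unit_mul: "x \<in> R \<Longrightarrow> hmul (neg unit) x = neg x"
  using neg_mul[of unit x] unit_nonzero by simp

lemma neg_nonzero [simp]: "x \<in> G \<Longrightarrow> neg x \<in> G"
  by simp

lemma mul_mem_add:
  assumes "s \<in> hadd a b" "a \<in> R" "b \<in> R" "c \<in> R"
  shows "hmul s c \<in> hadd (hmul a c) (hmul b c)"
proof -
  have "s \<in> R" using assms add_closed by blast
  then have "hmul s c = hmul c s" using assms(4) by (rule mul_commute)
  also have "hmul c s \<in> hmul c ` hadd a b" using assms(1) by blast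
  also have "\<dots> = hadd (hmul c a) (hmul c b)" using mul_distrib[of c a b] assms(2-4) by simp
  finally show ?thesis using assms(2-4) by (simp add: mul_commute)
qed

lemma hsum_scale:
  "c \<in> R \<Longrightarrow> set xs \<subseteq> R \<Longrightarrow> hmul c ` hsum hadd zero xs = hsum hadd zero (map (hmul c) xs)"
proof (induction xs)
  case (Cons a xs)
  have "hmul c ` ({a} \<boxplus> hsum hadd zero xs) = (\<Union>y\<in>hsum hadd zero xs. hmul c ` hadd a y)"
    unfolding setplus_def by auto
  also have "\<dots> = (\<Union>y\<in>hsum hadd zero xs. hadd (hmul c a) (hmul c y))"
    using Cons.prems hsum_closed[of xs] by (intro SUP_cong refl mul_distrib) auto
  also have "\<dots> = {hmul c a} \<boxplus> hmul c ` hsum hadd zero xs"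
    unfolding setplus_def by auto
  finally show ?case using Cons by simp
qed simp

lemma hsum_set_scale:
  "finite I \<Longrightarrow> c \<in> R \<Longrightarrow> f ` I \<subseteq> R \<Longrightarrow>
   hmul c ` hsum_set f I = hsum_set (\<lambda>i. hmul c (f i)) I"
  unfolding hsum_set_def by (subst hsum_scale) (auto simp: comp_def)

definition row_supp :: "(nat \<Rightarrow> nat \<Rightarrow> 'a) \<Rightarrow> nat set \<Rightarrow> nat \<Rightarrow> nat set" where
  "row_supp A S j = {i\<in>S. A j i \<noteq> zero}"

definition row_sum :: "(nat \<Rightarrow> nat \<Rightarrow> 'a) \<Rightarrow> (nat \<Rightarrow> 'a) \<Rightarrow> nat set \<Rightarrow> nat \<Rightarrow> 'a set" where
  "row_sum A x S j = hsum_set (\<lambda>i. hmul (A j i) (x i)) S"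

definition hall_system :: "nat set \<Rightarrow> nat set \<Rightarrow> (nat \<Rightarrow> nat \<Rightarrow> 'a) \<Rightarrow> bool" where
  "hall_system S E A \<longleftrightarrow>
     finite S \<and> finite E \<and> (\<forall>j\<in>E. \<forall>i\<in>S. A j i \<in> R) \<and> hall_surplus (row_supp A S) E"

definition has_nowhere_zero_solution :: "nat set \<Rightarrow> nat set \<Rightarrow> (nat \<Rightarrow> nat \<Rightarrow> 'a) \<Rightarrow> bool" where
  "has_nowhere_zero_solution S E A \<longleftrightarrow> (\<exists>x. (\<forall>i\<in>S. x i \<in> G) \<and> (\<forall>j\<in>E. zero \<in> row_sum A x S j))"

lemma row_supp_subset: "row_supp A S j \<subseteq> S"
  unfolding row_supp_def by blast

lemma row_terms_nonzero:
  assumes "\<forall>i\<in>S. A j i \<in> R \<and> x i \<in> G"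
  shows "\<forall>i\<in>row_supp A S j. hmul (A j i) (x i) \<in> G"
proof
  fix i assume "i \<in> row_supp A S j"
  then have "A j i \<in> G" "x i \<in> G" using assms unfolding row_supp_def by auto
  then show "hmul (A j i) (x i) \<in> G" by (rule mul_nonzero)
qed

lemma row_sum_closed: "\<forall>i\<in>S. A j i \<in> R \<and> x i \<in> R \<Longrightarrow> row_sum A x S j \<subseteq> R"
  unfolding row_sum_def by (intro hsum_set_closed) auto

lemma row_sum_cong:
  "finite S \<Longrightarrow> (\<And>i. i \<in> S \<Longrightarrow> hmul (A j i) (x i) = hmul (B k i) (y i)) \<Longrightarrow>
   row_sum A x S j = row_sum B y S k"
  unfolding row_sum_def by (rule hsum_set_cong)

lemma row_sum_insert:
  "finite S \<Longrightarrow> w \<notin> S \<Longrightarrow> \<forall>i\<in>insert w S. A j i \<in> R \<and> x i \<in> R \<Longrightarrow>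
   row_sum A x (insert w S) j = {hmul (A j w) (x w)} \<boxplus> row_sum A x S j"
  unfolding row_sum_def by (intro hsum_set_insert) auto

lemma row_sum_eq_row_supp:
  assumes "finite S" "\<forall>i\<in>S. A j i \<in> R \<and> x i \<in> R"
  shows "row_sum A x S j = row_sum A x (row_supp A S j) j"
  unfolding row_sum_def row_supp_def using assms by (intro hsum_set_mono_neutral) auto

lemma row_sum_update:
  assumes "finite S" "w \<in> S" "\<forall>i\<in>S. A j i \<in> R" "\<forall>i\<in>S - {w}. x i \<in> R" "t \<in> R"
  shows "row_sum A (x(w := t)) S j = {hmul (A j w) t} \<boxplus> row_sum A x (S - {w}) j"
proof -
  have "row_sum A (x(w := t)) (insert w (S - {w})) j =
      {hmul (A j w) ((x(w := t)) w)} \<boxplus> row_sum A (x(w := t)) (S - {w}) j"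
    by (rule row_sum_insert) (use assms in auto)
  also have "row_sum A (x(w := t)) (S - {w}) j = row_sum A x (S - {w}) j"
    using assms(1) by (intro row_sum_cong) auto
  finally show ?thesis by (simp only: insert_Diff[OF assms(2)] fun_upd_same)
qed

lemma has_nowhere_zero_solution_extend:
  assumes "finite S" "w \<in> S" "\<forall>j\<in>E. \<forall>i\<in>S. A j i \<in> R"
    and x: "\<forall>i\<in>S - {w}. x i \<in> G" and t: "t \<in> G"
    and rows: "\<And>j. j \<in> E \<Longrightarrow> zero \<in> {hmul (A j w) t} \<boxplus> row_sum A x (S - {w}) j"
  shows "has_nowhere_zero_solution S E A"
  unfolding has_nowhere_zero_solution_def
proof (intro exI conjI ballI)
  fix j assume "j \<in> E"
  then show "zero \<in> row_sum A (x(w := t)) S j"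
    using assms rows[of j] by (subst row_sum_update) auto
qed (use x t in auto)

lemma hall_system_remove_column:
  assumes "hall_system S E A" "E' \<subseteq> E" "\<forall>j\<in>E'. A j w = zero"
  shows "hall_system (S - {w}) E' A"
proof -
  have "row_supp A (S - {w}) j = row_supp A S j" if "j \<in> E'" for j
    using assms(3) that unfolding row_supp_def by auto
  moreover have "hall_surplus (row_supp A S) E'"
    using assms(1,2) hall_surplus_subset unfolding hall_system_def by blast
  ultimately have "hall_surplus (row_supp A (S - {w})) E'" by (rule hall_surplus_cong)
  then show ?thesis using assms(1,2) finite_subset unfolding hall_system_def by blast
qed

lemma has_nowhere_zero_solution_zero_column:
  assumes sys: "hall_system S E A" and w: "w \<in> S" "\<forall>j\<in>E. A j w = zero"
    and IH: "\<And>S' E' B. card S' < card S \<Longrightarrow> hall_system S' E' B \<Longrightarrow> has_nowhere_zero_solution S' E' B"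
  shows "has_nowhere_zero_solution S E A"
proof -
  have fin: "finite S" and entries: "\<forall>j\<in>E. \<forall>i\<in>S. A j i \<in> R"
    using sys unfolding hall_system_def by blast+
  have "card (S - {w}) < card S" using fin w(1) by (rule card_Diff1_less)
  then obtain x where x: "\<forall>i\<in>S - {w}. x i \<in> G" "\<forall>j\<in>E. zero \<in> row_sum A x (S - {w}) j"
    using IH[OF _ hall_system_remove_column[OF sys subset_refl w(2)]]
    unfolding has_nowhere_zero_solution_def by blast
  show ?thesis
  proof (rule has_nowhere_zero_solution_extend[OF fin w(1) entries x(1) unit_nonzero])
    fix j assume "j \<in> E"
    moreover have "row_sum A x (S - {w}) j \<subseteq> R" using entries x(1) \<open>j \<in> E\<close>
      by (intro row_sum_closed) auto
    ultimately show "zero \<in> {hmul (A j w) unit} \<boxplus> row_sum A x (S - {w}) j"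
      using x(2) w(2) by simp
  qed
qed

lemma has_nowhere_zero_solution_of_proportional_values:
  assumes fin: "finite S" and entries: "\<forall>j\<in>E. \<forall>i\<in>S. A j i \<in> R"
    and w: "w \<in> S" "e \<in> E" "f \<in> E" "\<forall>j\<in>E. A j w \<noteq> zero \<longleftrightarrow> j = e \<or> j = f"
    and x: "\<forall>i\<in>S - {w}. x i \<in> G" "\<forall>j\<in>E - {e, f}. zero \<in> row_sum A x (S - {w}) j"
    and s: "s1 \<in> row_sum A x (S - {w}) e" "s2 \<in> row_sum A x (S - {w}) f" "s2 \<in> G"
      "hmul (A f w) s1 = hmul (A e w) s2"
  shows "has_nowhere_zero_solution S E A"
proof -
  have Aw: "A e w \<in> G" "A f w \<in> G" using w entries by auto
  have s1R: "s1 \<in> R" using s(1) row_sum_closed[of "S - {w}" A e x] entries w(2) x(1) by blast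
  obtain t where t: "t \<in> G" "hmul (A f w) t = neg s2"
    using exists_mul_eq[OF Aw(2) neg_nonzero[OF s(3)]] by blast
  have "hmul (A f w) (hmul (A e w) t) = hmul (A e w) (hmul (A f w) t)"
    using Aw t(1) mul_assoc[symmetric] mul_commute[of "A f w" "A e w"] by simp
  also have "\<dots> = neg (hmul (A f w) s1)" using t(2) s(3,4) Aw by (simp add: mul_neg)
  also have "\<dots> = hmul (A f w) (neg s1)" using s1R Aw by (simp add: mul_neg)
  finally have et: "hmul (A e w) t = neg s1"
    using Aw t(1) s1R by (rule_tac mul_left_cancel[of "A f w"]) auto
  show ?thesis
  proof (rule has_nowhere_zero_solution_extend[OF fin w(1) entries x(1) t(1)])
    fix j assume j: "j \<in> E"
    show "zero \<in> {hmul (A j w) t} \<boxplus> row_sum A x (S - {w}) j"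
    proof (cases "j = e \<or> j = f")
      case True
      have "zero \<in> {neg s1} \<boxplus> row_sum A x (S - {w}) e" "zero \<in> {neg s2} \<boxplus> row_sum A x (S - {w}) f"
        using s zero_in_neg_add[of s1] zero_in_neg_add[of s2] s1R unfolding setplus_def by blast+
      then show ?thesis using True et t(2) by (elim disjE) simp_all
    next
      case False
      then have "A j w = zero" "zero \<in> row_sum A x (S - {w}) j" using j w(4) x(2) by blast+
      moreover have "row_sum A x (S - {w}) j \<subseteq> R" using entries j x(1) by (intro row_sum_closed) auto
      ultimately show ?thesis using t(1) by simp
    qed
  qed
qed

lemma hall_system_merge_columns:
  assumes sys: "hall_system S E A" and uv: "u \<in> S" "v \<in> S" "u \<noteq> v"
    and pair: "\<And>J. J \<subseteq> E - {e} \<Longrightarrow> u \<in> \<Union>(row_supp A S ` J) \<Longrightarrow> v \<in> \<Union>(row_supp A S ` J) \<Longrightarrow>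
                 card J + 2 \<le> card (\<Union>(row_supp A S ` J))"
    and Bu: "\<forall>j\<in>E - {e}. B j u \<in> R \<and> (B j u = zero \<longleftrightarrow> A j u = zero \<and> A j v = zero)"
    and B: "\<forall>j\<in>E - {e}. \<forall>i\<in>S - {u}. B j i = A j i"
  shows "hall_system (S - {v}) (E - {e}) B"
proof -
  have fin: "finite S" "finite E" and entries: "\<forall>j\<in>E. \<forall>i\<in>S. A j i \<in> R"
    and hall: "hall_surplus (row_supp A S) E"
    using sys unfolding hall_system_def by blast+
  have supp: "row_supp B (S - {v}) j =
      row_supp A S j - {v} \<union> (if v \<in> row_supp A S j then {u} else {})" if j: "j \<in> E - {e}" for j
  proof -
    have u_iff: "u \<in> row_supp B (S - {v}) j \<longleftrightarrow> u \<in> row_supp A S j \<or> v \<in> row_supp A S j"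
      using Bu j uv unfolding row_supp_def by auto
    have other_iff: "i \<in> row_supp B (S - {v}) j \<longleftrightarrow> i \<in> row_supp A S j - {v}" if "i \<noteq> u" for i
      using B j that unfolding row_supp_def by auto
    have "\<forall>i. i \<in> row_supp B (S - {v}) j \<longleftrightarrow>
        i \<in> row_supp A S j - {v} \<union> (if v \<in> row_supp A S j then {u} else {})"
    proof
      fix i
      show "i \<in> row_supp B (S - {v}) j \<longleftrightarrow>
          i \<in> row_supp A S j - {v} \<union> (if v \<in> row_supp A S j then {u} else {})"
        using u_iff other_iff[of i] uv(3) by (cases "i = u") auto
    qed
    then show ?thesis by (simp add: set_eq_iff)
  qed
  have "hall_surplus (\<lambda>j. row_supp A S j - {v} \<union> (if v \<in> row_supp A S j then {u} else {})) (E - {e})"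
    using hall_surplus_merge[OF hall_surplus_subset[OF hall] uv(3) pair] by blast
  then have "hall_surplus (row_supp B (S - {v})) (E - {e})"
    by (rule hall_surplus_cong[rotated]) (rule supp)
  moreover have "\<forall>j\<in>E - {e}. \<forall>i\<in>S - {v}. B j i \<in> R"
    using Bu B entries by (metis DiffD1 DiffI empty_iff insert_iff)
  ultimately show ?thesis using fin unfolding hall_system_def by blast
qed

lemma row_sum_merge_columns_subset:
  assumes fin: "finite S" and uv: "u \<in> S" "v \<in> S" "u \<noteq> v"
    and entries: "\<forall>i\<in>S. A j i \<in> R" and x: "\<forall>i\<in>S - {v}. x i \<in> R" and lam: "lam \<in> R"
    and Bu: "B j u \<in> hadd (A j u) (hmul (A j v) lam)" and B: "\<forall>i\<in>S - {u}. B j i = A j i"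
  shows "row_sum B x (S - {v}) j \<subseteq> row_sum A (x(v := hmul lam (x u))) S j"
proof -
  define S0 where "S0 = S - {u, v}"
  let ?y = "x(v := hmul lam (x u))"
  have fin0: "finite S0" and S0: "u \<notin> S0" "v \<notin> S0" using fin unfolding S0_def by auto
  have S_eq: "S = insert u (insert v S0)" and S'_eq: "S - {v} = insert u S0"
    using uv unfolding S0_def by auto
  have xu: "x u \<in> R" using x uv by blast
  have Au: "A j u \<in> R" and Av: "A j v \<in> R" using entries uv by auto
  have BuR: "B j u \<in> R" using Bu Au Av lam add_closed[of "A j u" "hmul (A j v) lam"] by auto
  have rest: "row_sum B x S0 j = row_sum A ?y S0 j"
    using fin0 B S0 unfolding S0_def by (intro row_sum_cong) auto
  have "row_sum B x (S - {v}) j = {hmul (B j u) (x u)} \<boxplus> row_sum B x S0 j"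
    unfolding S'_eq using fin0 S0 B BuR x entries xu unfolding S0_def
    by (intro row_sum_insert) auto
  also have "hmul (B j u) (x u) \<in> hadd (hmul (A j u) (x u)) (hmul (A j v) (hmul lam (x u)))"
    using mul_mem_add[OF Bu Au _ xu] Av lam xu by (simp add: mul_assoc)
  then have "{hmul (B j u) (x u)} \<boxplus> row_sum B x S0 j \<subseteq>
      {hmul (A j u) (x u)} \<boxplus> {hmul (A j v) (hmul lam (x u))} \<boxplus> row_sum A ?y S0 j"
    unfolding rest by (intro set_hadd_mono) auto
  also have "\<dots> = {hmul (A j u) (x u)} \<boxplus> ({hmul (A j v) (hmul lam (x u))} \<boxplus> row_sum A ?y S0 j)"
  proof (rule set_hadd_assoc)
    show "row_sum A ?y S0 j \<subseteq> R" using x entries S0 unfolding S0_def by (intro row_sum_closed) auto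
  qed (use Au Av lam xu in auto)
  also have "\<dots> = row_sum A ?y S j"
  proof -
    have R: "\<forall>i\<in>insert u (insert v S0). A j i \<in> R \<and> ?y i \<in> R"
      using x entries lam xu S_eq by auto
    have "row_sum A ?y (insert v S0) j = {hmul (A j v) (?y v)} \<boxplus> row_sum A ?y S0 j"
      using fin0 S0(2) R by (intro row_sum_insert) auto
    moreover have "row_sum A ?y (insert u (insert v S0)) j =
        {hmul (A j u) (?y u)} \<boxplus> row_sum A ?y (insert v S0) j"
      using fin0 S0 uv(3) R by (intro row_sum_insert) auto
    ultimately show ?thesis using S_eq uv(3) by simp
  qed
  finally show ?thesis .
qed

text \<open>Termwise, \<open>B g i \<cdot> x i \<in> a \<cdot> A e i \<cdot> x i + (-b \<cdot> A f i \<cdot> x i)\<close>; summing and factoring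
  out \<open>a\<close> and \<open>-b\<close> places zero in \<open>a \<cdot> r\<^sub>1 + (-b \<cdot> r\<^sub>2)\<close>.\<close>
lemma obtain_proportional_row_values:
  assumes "finite T" "a \<in> R" "b \<in> R"
    and entries: "\<forall>i\<in>T. A e i \<in> R \<and> A f i \<in> R \<and> x i \<in> R"
    and comb: "\<forall>i\<in>T. B g i \<in> hadd (hmul a (A e i)) (neg (hmul b (A f i)))"
    and zero: "zero \<in> row_sum B x T g"
  obtains r1 r2 where "r1 \<in> row_sum A x T e" "r2 \<in> row_sum A x T f" "hmul a r1 = hmul b r2"
proof -
  let ?p = "\<lambda>i. hmul a (hmul (A e i) (x i))"
  let ?q = "\<lambda>i. hmul (neg unit) (hmul b (hmul (A f i) (x i)))"
  have terms: "?p i \<in> R \<and> ?q i \<in> R \<and> hmul (B g i) (x i) \<in> hadd (?p i) (?q i)" if "i \<in> T" for i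
  proof -
    have R: "A e i \<in> R" "A f i \<in> R" "x i \<in> R" using entries that by auto
    have "hmul (B g i) (x i) \<in> hadd (hmul (hmul a (A e i)) (x i)) (hmul (neg (hmul b (A f i))) (x i))"
      using comb that R assms(2,3) by (intro mul_mem_add) auto
    then show ?thesis using R assms(2,3) by (simp add: mul_assoc neg_mul neg_unit_mul)
  qed
  have "row_sum B x T g \<subseteq> hsum_set ?p T \<boxplus> hsum_set ?q T"
    unfolding row_sum_def using assms(1) terms by (rule hsum_set_subset_set_hadd)
  also have "hsum_set ?p T = hmul a ` row_sum A x T e"
    unfolding row_sum_def using assms entries by (intro hsum_set_scale[symmetric]) auto
  also have "hsum_set ?q T = hmul (neg unit) ` hmul b ` row_sum A x T f"
  proof -
    have "hsum_set ?q T = hmul (neg unit) ` hsum_set (\<lambda>i. hmul b (hmul (A f i) (x i))) T"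
      using assms entries by (intro hsum_set_scale[symmetric]) auto
    also have "hsum_set (\<lambda>i. hmul b (hmul (A f i) (x i))) T = hmul b ` row_sum A x T f"
      unfolding row_sum_def using assms entries by (intro hsum_set_scale[symmetric]) auto
    finally show ?thesis .
  qed
  finally obtain r1 r2 where r: "r1 \<in> row_sum A x T e" "r2 \<in> row_sum A x T f"
    and zero_sum: "zero \<in> hadd (hmul a r1) (hmul (neg unit) (hmul b r2))"
    using zero unfolding setplus_def by blast
  have R: "r1 \<in> R" "r2 \<in> R"
    using r row_sum_closed[of T A e x] row_sum_closed[of T A f x] entries by auto
  then have "neg (hmul b r2) = neg (hmul a r1)"
    using zero_sum assms(2,3) by (simp add: neg_unit_mul neg_unique)
  then have "neg (neg (hmul b r2)) = neg (neg (hmul a r1))" by simp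
  then have "hmul a r1 = hmul b r2" using R assms(2,3) by simp
  then show thesis using that r by blast
qed

lemma hall_system_eliminate_column:
  assumes sys: "hall_system S E A" and w: "w \<in> S" "e \<in> E" "f \<in> E" "e \<noteq> f"
    "\<forall>j\<in>E. A j w \<noteq> zero \<longleftrightarrow> j = e \<or> j = f" and g: "g \<notin> E"
    and Bg: "\<forall>i\<in>S - {w}. B g i \<in> R \<and> (B g i = zero \<longleftrightarrow> A e i = zero \<and> A f i = zero)"
    and B: "\<forall>j\<in>E. B j = A j"
  shows "hall_system (S - {w}) (insert g (E - {e, f})) B"
proof -
  have fin: "finite S" "finite E" and entries: "\<forall>j\<in>E. \<forall>i\<in>S. A j i \<in> R"
    and hall: "hall_surplus (row_supp A S) E"
    using sys unfolding hall_system_def by blast+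
  let ?N = "row_supp A S" and ?N' = "row_supp B (S - {w})"
  have supp_g: "?N' g = ?N e \<union> ?N f - {w}" using Bg unfolding row_supp_def by auto
  have supp_j: "?N' j = ?N j" if "j \<in> E - {e, f}" for j
    using B w(5) that unfolding row_supp_def by auto
  have "card J + 1 \<le> card (\<Union>(?N' ` J))" if J: "J \<subseteq> insert g (E - {e, f})" "J \<noteq> {}" for J
  proof (cases "g \<in> J")
    case False
    then have JE: "J \<subseteq> E - {e, f}" using J(1) by blast
    then have "\<Union>(?N' ` J) = \<Union>(?N ` J)" by (intro SUP_cong refl supp_j) blast
    then show ?thesis using hall_surplusD[OF hall _ J(2)] JE by auto
  next
    case True
    define J1 where "J1 = J - {g}"
    have J1E: "J1 \<subseteq> E - {e, f}" using J(1) unfolding J1_def by blast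
    have finJ1: "finite J1" using J1E fin(2) finite_subset by blast
    have J_eq: "J = insert g J1" "g \<notin> J1" using True unfolding J1_def by blast+
    have "e \<notin> J1" "f \<notin> J1" using J1E by blast+
    then have "card (insert e (insert f J1)) = card J1 + 2" using finJ1 w(4) by simp
    moreover have "card J = card J1 + 1" using J_eq finJ1 by simp
    moreover define M where "M = \<Union>(?N ` insert e (insert f J1))"
    have eqM: "\<Union>(?N' ` J) = M - {w}"
    proof -
      have "w \<notin> \<Union>(?N ` J1)" using J1E w(5) unfolding row_supp_def by blast
      moreover have "\<Union>(?N' ` J1) = \<Union>(?N ` J1)" using J1E by (intro SUP_cong refl supp_j) blast
      ultimately show ?thesis unfolding M_def using supp_g J_eq(1) by auto
    qed
    moreover have "card (insert e (insert f J1)) + 1 \<le> card M"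
      unfolding M_def using J1E w(2,3) by (intro hall_surplusD[OF hall]) auto
    moreover have "card M \<le> card (M - {w}) + 1"
      using card_Suc_Diff1[of M w] by (cases "w \<in> M"; cases "finite M") auto
    ultimately show ?thesis unfolding eqM by linarith
  qed
  then have "hall_surplus ?N' (insert g (E - {e, f}))" unfolding hall_surplus_def by blast
  moreover have "\<forall>j\<in>insert g (E - {e, f}). \<forall>i\<in>S - {w}. B j i \<in> R" using Bg B entries by auto
  ultimately show ?thesis using fin unfolding hall_system_def by blast
qed

lemma exists_column_in_two_rows:
  assumes sys: "hall_system S E A" and "E \<noteq> {}" and three: "\<forall>j\<in>E. card (row_supp A S j) = 3"
    and in_rows: "\<forall>w\<in>S. \<exists>j\<in>E. A j w \<noteq> zero"
    and not_single: "\<forall>w\<in>S. \<not> (\<exists>e\<in>E. \<forall>j\<in>E. A j w \<noteq> zero \<longleftrightarrow> j = e)"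
  shows "\<exists>w\<in>S. \<exists>e\<in>E. \<exists>f\<in>E. e \<noteq> f \<and> (\<forall>j\<in>E. A j w \<noteq> zero \<longleftrightarrow> j = e \<or> j = f)"
proof -
  have fin: "finite S" "finite E" and hall: "hall_surplus (row_supp A S) E"
    using sys unfolding hall_system_def by blast+
  obtain w where w: "w \<in> S" "card {j\<in>E. w \<in> row_supp A S j} < 3"
    using hall_surplus_exists_low_degree[OF hall fin \<open>E \<noteq> {}\<close>] three row_supp_subset by blast
  define D where "D = {j\<in>E. A j w \<noteq> zero}"
  have "{j\<in>E. w \<in> row_supp A S j} = D" using w(1) unfolding D_def row_supp_def by blast
  then have "card D < 3" using w(2) by simp
  moreover have "finite D" using fin(2) unfolding D_def by simp
  then have "card D \<noteq> 0" using in_rows w(1) unfolding D_def by auto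
  moreover have "card D \<noteq> 1"
  proof
    assume "card D = 1"
    then obtain e where "D = {e}" by (rule card_1_singletonE)
    then have "e \<in> E" "\<forall>j\<in>E. A j w \<noteq> zero \<longleftrightarrow> j = e" unfolding D_def by blast+
    then show False using not_single w(1) by blast
  qed
  ultimately have "card D = 2" by linarith
  then obtain e f where "D = {e, f}" "e \<noteq> f" by (meson card_2_iff)
  then show ?thesis using w(1) unfolding D_def by blast
qed

lemma lin_form_eq_row_sum:
  assumes "\<forall>i<n. A j i \<in> R \<and> x i \<in> R"
  shows "lin_form hadd hmul zero n (A j) x = row_sum A x {..<n} j"
proof -
  let ?f = "\<lambda>i. hmul (A j i) (x i)"
  have "lin_form hadd hmul zero n (A j) x = hsum_set ?f (set (filter (\<lambda>i. A j i \<noteq> zero) [0..<n]))"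
    unfolding lin_form_def using assms by (subst hsum_eq_hsum_set) auto
  also have "set (filter (\<lambda>i. A j i \<noteq> zero) [0..<n]) = row_supp A {..<n} j"
    unfolding row_supp_def by auto
  also have "hsum_set ?f (row_supp A {..<n} j) = row_sum A x {..<n} j"
    using row_sum_eq_row_supp[of "{..<n}" A j x] assms unfolding row_sum_def by simp
  finally show ?thesis .
qed

lemma lin_form_extend_by_zero:
  assumes "S \<subseteq> {..<n}" "\<forall>i<n. A j i \<in> R" "\<forall>i\<in>S. x i \<in> R"
  shows "lin_form hadd hmul zero n (A j) (\<lambda>i. if i \<in> S then x i else zero) = row_sum A x S j"
proof -
  let ?y = "\<lambda>i. if i \<in> S then x i else zero"
  have "lin_form hadd hmul zero n (A j) ?y = row_sum A ?y {..<n} j"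
    using assms by (intro lin_form_eq_row_sum) auto
  also have "\<dots> = row_sum A ?y S j"
    unfolding row_sum_def using assms by (intro hsum_set_mono_neutral) auto
  also have "\<dots> = row_sum A x S j"
    using assms(1) finite_subset by (intro row_sum_cong) auto
  finally show ?thesis .
qed

lemma row_sum_empty_row_supp:
  assumes "finite S" "\<forall>i\<in>S. A j i \<in> R \<and> x i \<in> R" "row_supp A S j = {}"
  shows "row_sum A x S j = {zero}"
  using row_sum_eq_row_supp[of S A j x, OF assms(1,2)] assms(3) unfolding row_sum_def by simp

lemma obtain_hall_subsystem:
  assumes "k < n" and entries: "\<forall>j<k. \<forall>i<n. A j i \<in> R"
  obtains S where "S \<subseteq> {..<n}" "S \<noteq> {}" "hall_system S {j\<in>{..<k}. row_supp A S j \<noteq> {}} A"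
proof -
  obtain S where S: "S \<subseteq> {..<n}" "S \<noteq> {}"
    and hall: "hall_surplus (\<lambda>j. row_supp A {..<n} j \<inter> S) {j\<in>{..<k}. row_supp A {..<n} j \<inter> S \<noteq> {}}"
    using obtain_hall_surplus_restriction[of "{..<n}" "{..<k}"] \<open>k < n\<close> by auto
  have "row_supp A {..<n} j \<inter> S = row_supp A S j" for j
    using S(1) unfolding row_supp_def by blast
  then have "hall_surplus (row_supp A S) {j\<in>{..<k}. row_supp A S j \<noteq> {}}" using hall by simp
  moreover have "finite S" using finite_subset[OF S(1)] by simp
  moreover have "\<forall>j\<in>{j\<in>{..<k}. row_supp A S j \<noteq> {}}. \<forall>i\<in>S. A j i \<in> R" using entries S(1) by auto
  ultimately have "hall_system S {j\<in>{..<k}. row_supp A S j \<noteq> {}} A" unfolding hall_system_def by simp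
  with S show thesis by (rule that)
qed

end

section \<open>Massouros hyperfields\<close>

locale massouros_hyperfield =
  fixes R :: "'a set" and hadd :: "'a \<Rightarrow> 'a \<Rightarrow> 'a set" and hmul :: "'a \<Rightarrow> 'a \<Rightarrow> 'a"
    and zero unit :: 'a and H :: "('b, 'c) monoid_scheme" and phi :: "'a \<Rightarrow> 'b"
  assumes massouros: "massouros R hadd hmul zero unit H phi"

sublocale massouros_hyperfield \<subseteq> comm_hyperfield R hadd zero hmul unit
proof -
  have hf: "hyperfield R hadd hmul zero unit"
    using massouros unfolding massouros_def Let_def by (elim conjE)
  have cg: "comm_group (mult_group R hmul zero unit)"
    using massouros unfolding massouros_def Let_def by (elim conjE)
  have zm: "\<forall>x\<in>R. hmul zero x = zero \<and> hmul x zero = zero"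
    using massouros unfolding massouros_def Let_def by (elim conjE)
  have hg: "hypergroup R hadd zero" using hf unfolding hyperfield_def by (elim conjE)
  show "comm_hyperfield R hadd zero hmul unit"
    using comm_hyperfield_axioms.intro[OF hf cg] zm additive_hypergroup.intro[OF hg]
    by (intro comm_hyperfield.intro) blast+
qed

context massouros_hyperfield
begin

lemma phi_hom: "phi \<in> hom (mult_group R hmul zero unit) H"
  using massouros unfolding massouros_def Let_def by (elim conjE)

lemma phi_mul: "x \<in> G \<Longrightarrow> y \<in> G \<Longrightarrow> phi (hmul x y) = phi x \<otimes>\<^bsub>H\<^esub> phi y"
  using hom_mult[OF phi_hom, of x y] by simp

lemma phi_closed: "x \<in> G \<Longrightarrow> phi x \<in> carrier H"
  using hom_in_carrier[OF phi_hom, of x] by simp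

lemma group_H: "group H"
  using massouros unfolding massouros_def Let_def by (elim conjE)

lemma phi_neg: "x \<in> G \<Longrightarrow> phi (neg x) = phi x"
  using massouros unfolding massouros_def Let_def by (elim conjE) blast

lemma add_same_class:
  "x \<in> G \<Longrightarrow> y \<in> G \<Longrightarrow> phi x = phi y \<Longrightarrow> g \<in> G \<Longrightarrow> phi g \<noteq> phi x \<Longrightarrow> g \<in> hadd x y"
  using massouros unfolding massouros_def Let_def by (elim conjE) blast

lemma add_distinct_classes:
  "x \<in> G \<Longrightarrow> y \<in> G \<Longrightarrow> phi x \<noteq> phi y \<Longrightarrow> g \<in> G \<Longrightarrow> phi g = phi x \<or> phi g = phi y \<Longrightarrow>
   g \<in> hadd x y"
  using massouros unfolding massouros_def Let_def by (elim conjE) blast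

lemma three_classes: "\<exists>a b c. a \<in> G \<and> b \<in> G \<and> c \<in> G \<and> phi a \<noteq> phi b \<and> phi a \<noteq> phi c \<and> phi b \<noteq> phi c"
  using massouros unfolding massouros_def Let_def by (elim conjE) blast

lemma exists_outside_two_classes: "\<exists>g\<in>G. phi g \<noteq> c \<and> phi g \<noteq> d"
proof -
  obtain a b e where "a \<in> G" "b \<in> G" "e \<in> G" "phi a \<noteq> phi b" "phi a \<noteq> phi e" "phi b \<noteq> phi e"
    using three_classes by blast
  then show ?thesis by metis
qed

lemma exists_outside_two_classes_twisted:
  assumes "\<rho> \<in> G"
  shows "\<exists>g\<in>G. phi g \<noteq> c \<and> phi (hmul \<rho> g) \<noteq> d"
proof -
  obtain a b e where abe: "a \<in> G" "b \<in> G" "e \<in> G"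
    "phi a \<noteq> phi b" "phi a \<noteq> phi e" "phi b \<noteq> phi e"
    using three_classes by blast
  have twist_inj: "phi (hmul \<rho> x) \<noteq> phi (hmul \<rho> y)" if "x \<in> G" "y \<in> G" "phi x \<noteq> phi y" for x y
    using that assms phi_mul phi_closed group.Units_eq[OF group_H]
      monoid.Units_l_cancel[OF group.is_monoid[OF group_H], of "phi \<rho>" "phi x" "phi y"]
    by simp
  have "phi (hmul \<rho> a) \<noteq> phi (hmul \<rho> b)" "phi (hmul \<rho> a) \<noteq> phi (hmul \<rho> e)"
    "phi (hmul \<rho> b) \<noteq> phi (hmul \<rho> e)"
    using abe twist_inj by auto
  then show ?thesis
    using abe(1-3) by (metis abe(4-6))
qed

lemma exists_nonzero_in_add:
  assumes "p \<in> R" "q \<in> R"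
  shows "\<exists>s\<in>hadd p q. s = zero \<longleftrightarrow> p = zero \<and> q = zero"
proof (cases "p = zero \<or> q = zero")
  case True
  then show ?thesis using assms by auto
next
  case False
  then have pq: "p \<in> G" "q \<in> G" using assms by auto
  show ?thesis
  proof (cases "phi p = phi q")
    case True
    obtain g where "g \<in> G" "phi g \<noteq> phi p" using exists_outside_two_classes by blast
    then show ?thesis using add_same_class[OF pq True] False by blast
  next
    case False
    then show ?thesis using add_distinct_classes[OF pq False, of p] pq by blast
  qed
qed

lemma obtain_nondegenerate_sums:
  assumes "\<forall>i\<in>T. p i \<in> R \<and> q i \<in> R"
  obtains c where "\<forall>i\<in>T. c i \<in> hadd (p i) (q i) \<and> c i \<in> R \<and> (c i = zero \<longleftrightarrow> p i = zero \<and> q i = zero)"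
proof -
  have "\<forall>i\<in>T. \<exists>s. s \<in> hadd (p i) (q i) \<and> s \<in> R \<and> (s = zero \<longleftrightarrow> p i = zero \<and> q i = zero)"
    using exists_nonzero_in_add assms add_closed by blast
  from bchoice[OF this] show thesis using that by blast
qed

lemma mem_add_neg: "t \<in> G \<Longrightarrow> g \<in> G \<Longrightarrow> phi g \<noteq> phi t \<Longrightarrow> g \<in> hadd t (neg t)"
  using add_same_class[of t "neg t" g] phi_neg[of t] by simp

lemma hsum_set_outside_class:
  assumes "finite I" "2 \<le> card I" "\<forall>i\<in>I. f i \<in> G"
  shows "\<exists>z\<in>hsum_set f I. z \<in> G \<and> phi z \<noteq> c"
  using assms
proof (induction I arbitrary: c rule: finite_induct)
  case empty
  then show ?case by simp
next
  case (insert a I)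
  have fa: "f a \<in> G" and fI: "\<forall>i\<in>I. f i \<in> G" using insert.prems by auto
  have sum: "hsum_set f (insert a I) = {f a} \<boxplus> hsum_set f I"
    using insert.hyps insert.prems by (intro hsum_set_insert) auto
  show ?case
  proof (cases "card I = 1")
    case True
    then obtain b where I: "I = {b}" by (meson card_1_singletonE)
    then have fb: "f b \<in> G" using fI by simp
    have sum2: "hsum_set f (insert a I) = hadd (f a) (f b)"
      using sum I fb by simp
    show ?thesis
    proof (cases "phi (f a) = phi (f b)")
      case True
      obtain g where "g \<in> G" "phi g \<noteq> c" "phi g \<noteq> phi (f a)"
        using exists_outside_two_classes by blast
      then show ?thesis using add_same_class[OF fa fb True] sum2 by blast
    next
      case False
      then have "f a \<in> hadd (f a) (f b)" "f b \<in> hadd (f a) (f b)"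
        using add_distinct_classes[OF fa fb False] fa fb by auto
      then show ?thesis using sum2 fa fb False by metis
    qed
  next
    case False
    then have "2 \<le> card I" using insert by simp
    then obtain z where z: "z \<in> hsum_set f I" "z \<in> G" "phi z \<noteq> phi (f a)"
      using insert.IH fI by blast
    have "hadd (f a) z \<subseteq> hsum_set f (insert a I)"
      unfolding sum setplus_def using z(1) by blast
    moreover have "z \<in> hadd (f a) z" "f a \<in> hadd (f a) z"
      using add_distinct_classes[OF fa z(2)] z fa by auto
    ultimately show ?thesis using z fa by (metis subsetD)
  qed
qed

lemma hsum_set_nonzero_element:
  assumes "finite I" "I \<noteq> {}" "\<forall>i\<in>I. f i \<in> G"
  shows "\<exists>z\<in>hsum_set f I. z \<in> G"
proof (cases "card I = 1")
  case True
  then obtain i where "I = {i}" by (meson card_1_singletonE)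
  then show ?thesis using assms by simp
next
  case False
  moreover have "card I \<noteq> 0" using assms(1,2) by simp
  ultimately have "2 \<le> card I" by linarith
  then show ?thesis using hsum_set_outside_class[OF assms(1) _ assms(3)] by blast
qed

lemma row_sum_nonzero_element:
  assumes "finite S" "\<forall>i\<in>S. A j i \<in> R \<and> x i \<in> G" "row_supp A S j \<noteq> {}"
  shows "\<exists>r\<in>row_sum A x S j. r \<in> G"
proof -
  have "row_sum A x S j = row_sum A x (row_supp A S j) j"
    using assms(1,2) by (intro row_sum_eq_row_supp) auto
  moreover have "finite (row_supp A S j)" using assms(1) finite_subset[OF row_supp_subset] by blast
  moreover have "\<forall>i\<in>row_supp A S j. hmul (A j i) (x i) \<in> G"
    using assms(2) by (rule row_terms_nonzero)
  ultimately show ?thesis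
    using hsum_set_nonzero_element[OF _ assms(3)] unfolding row_sum_def by simp
qed

lemma has_nowhere_zero_solution_single_row_column:
  assumes sys: "hall_system S E A" and w: "w \<in> S" "e \<in> E" "\<forall>j\<in>E. A j w \<noteq> zero \<longleftrightarrow> j = e"
    and IH: "\<And>S' E' B. card S' < card S \<Longrightarrow> hall_system S' E' B \<Longrightarrow> has_nowhere_zero_solution S' E' B"
  shows "has_nowhere_zero_solution S E A"
proof -
  have fin: "finite S" and entries: "\<forall>j\<in>E. \<forall>i\<in>S. A j i \<in> R"
    and hall: "hall_surplus (row_supp A S) E"
    using sys unfolding hall_system_def by blast+
  have "card (S - {w}) < card S" using fin w(1) by (rule card_Diff1_less)
  moreover have "hall_system (S - {w}) (E - {e}) A"
    using w(3) by (intro hall_system_remove_column[OF sys]) auto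
  ultimately obtain x where x: "\<forall>i\<in>S - {w}. x i \<in> G" "\<forall>j\<in>E - {e}. zero \<in> row_sum A x (S - {w}) j"
    using IH unfolding has_nowhere_zero_solution_def by blast
  have xe: "\<forall>i\<in>S - {w}. A e i \<in> R \<and> x i \<in> G" using x entries w(2) by blast
  have "2 \<le> card (row_supp A S e)" using hall_surplus_card_ge_2[OF hall w(2)] .
  moreover have "row_supp A S e \<subseteq> insert w (row_supp A (S - {w}) e)" unfolding row_supp_def by blast
  moreover have "finite (row_supp A (S - {w}) e)" using fin unfolding row_supp_def by simp
  ultimately have "row_supp A (S - {w}) e \<noteq> {}"
    using card_mono[of "insert w (row_supp A (S - {w}) e)" "row_supp A S e"] by auto
  then obtain r where r_row: "r \<in> row_sum A x (S - {w}) e" and r: "r \<in> G"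
    using row_sum_nonzero_element[of "S - {w}" A e x] xe fin by blast
  have "A e w \<in> G" using entries w by blast
  then obtain t where t: "t \<in> G" "hmul (A e w) t = neg r"
    using exists_mul_eq[of "A e w" "neg r"] r by auto
  show ?thesis
  proof (rule has_nowhere_zero_solution_extend[OF fin w(1) entries x(1) t(1)])
    fix j assume j: "j \<in> E"
    show "zero \<in> {hmul (A j w) t} \<boxplus> row_sum A x (S - {w}) j"
    proof (cases "j = e")
      case True
      have "zero \<in> hadd (neg r) r" using zero_in_neg_add[of r] r by blast
      then have "zero \<in> {neg r} \<boxplus> row_sum A x (S - {w}) e"
        using r_row unfolding setplus_def by blast
      then show ?thesis using True t(2) by simp
    next
      case False
      then have "A j w = zero" "zero \<in> row_sum A x (S - {w}) j" using x(2) w(3) j by blast+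
      moreover have "row_sum A x (S - {w}) j \<subseteq> R"
        using entries x(1) j by (intro row_sum_closed) blast
      ultimately show ?thesis using t(1) by simp
    qed
  qed
qed

lemma zero_in_row_sum_cancelling_pair:
  assumes fin: "finite S" and y: "\<forall>i\<in>S. A e i \<in> R \<and> y i \<in> G"
    and uv: "u \<in> row_supp A S e" "v \<in> row_supp A S e" "u \<noteq> v"
    and cancel: "hmul (A e v) (y v) = neg (hmul (A e u) (y u))"
    and card: "card (row_supp A S e) \<noteq> 3"
  shows "zero \<in> row_sum A y S e"
proof -
  let ?f = "\<lambda>i. hmul (A e i) (y i)"
  define D where "D = row_supp A S e - {u, v}"
  define t where "t = ?f u"
  have terms: "\<forall>i\<in>row_supp A S e. ?f i \<in> G" using y by (rule row_terms_nonzero)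
  have supp: "row_supp A S e = insert u (insert v D)" using uv unfolding D_def by blast
  have finD: "finite D" using fin finite_subset[OF row_supp_subset] unfolding D_def by blast
  have DG: "\<forall>i\<in>D. ?f i \<in> G" using terms unfolding D_def by blast
  have t: "t \<in> G" using terms uv(1) unfolding t_def by blast
  have fR: "?f ` insert u (insert v D) \<subseteq> R" using terms supp by blast
  have "row_sum A y S e = hsum_set ?f (insert u (insert v D))"
    using row_sum_eq_row_supp[of S A e y] fin y supp unfolding row_sum_def by auto
  also have "\<dots> = {t} \<boxplus> ({neg t} \<boxplus> hsum_set ?f D)"
    using finD uv(3) fR cancel unfolding t_def D_def by (simp add: hsum_set_insert)
  also have "\<dots> = hadd t (neg t) \<boxplus> hsum_set ?f D"
  proof -
    have "hsum_set ?f D \<subseteq> R" using DG by (intro hsum_set_closed) blast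
    then show ?thesis using set_hadd_assoc[of "{t}" "{neg t}" "hsum_set ?f D"] t by simp
  qed
  finally have sum: "row_sum A y S e = hadd t (neg t) \<boxplus> hsum_set ?f D" .
  have "u \<notin> D" "v \<notin> D" unfolding D_def by blast+
  then have "card (row_supp A S e) = card D + 2" unfolding supp using finD uv(3) by simp
  then have "card D \<noteq> 1" using card by simp
  show ?thesis
  proof (cases "D = {}")
    case True
    then show ?thesis using sum zero_in_add_neg[of t] t add_closed[of t "neg t"] by simp
  next
    case False
    then have "card D \<noteq> 0" using finD by simp
    then have "2 \<le> card D" using \<open>card D \<noteq> 1\<close> by linarith
    then obtain z where z: "z \<in> hsum_set ?f D" "z \<in> G" "phi z \<noteq> phi t"
      using hsum_set_outside_class[OF finD _ DG] by blast
    have "neg z \<in> hadd t (neg t)" using mem_add_neg[OF t, of "neg z"] z phi_neg by simp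
    moreover have "zero \<in> hadd (neg z) z" using zero_in_neg_add z(2) by blast
    ultimately show ?thesis using sum z(1) unfolding setplus_def by blast
  qed
qed

lemma has_nowhere_zero_solution_unmerge_columns:
  assumes fin: "finite S" and entries: "\<forall>j\<in>E. \<forall>i\<in>S. A j i \<in> R"
    and e: "e \<in> E" "card (row_supp A S e) \<noteq> 3"
    and uv: "u \<in> row_supp A S e" "v \<in> row_supp A S e" "u \<noteq> v"
    and lam: "lam \<in> G" "hmul (A e v) lam = neg (A e u)"
    and Bu: "\<forall>j\<in>E - {e}. B j u \<in> hadd (A j u) (hmul (A j v) lam)"
    and B: "\<forall>j\<in>E - {e}. \<forall>i\<in>S - {u}. B j i = A j i"
    and x: "\<forall>i\<in>S - {v}. x i \<in> G" "\<forall>j\<in>E - {e}. zero \<in> row_sum B x (S - {v}) j"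
  shows "has_nowhere_zero_solution S E A"
proof -
  have uvS: "u \<in> S" "v \<in> S" using uv row_supp_subset by blast+
  have Aeu: "A e u \<in> G" and Aev: "A e v \<in> G" using uv entries e(1) unfolding row_supp_def by auto
  define y where "y = x(v := hmul lam (x u))"
  have xu: "x u \<in> G" using x(1) uvS uv(3) by blast
  have y: "\<forall>i\<in>S. y i \<in> G" using x(1) mul_nonzero[OF lam(1) xu] unfolding y_def by auto
  have "zero \<in> row_sum A y S j" if j: "j \<in> E" for j
  proof (cases "j = e")
    case True
    have "hmul (A e v) (y v) = hmul (hmul (A e v) lam) (x u)"
      unfolding y_def using Aev lam(1) xu by (simp add: mul_assoc)
    also have "\<dots> = neg (hmul (A e u) (y u))"
      unfolding y_def using lam(2) Aeu xu uv(3) by (simp add: neg_mul)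
    finally have cancel: "hmul (A e v) (y v) = neg (hmul (A e u) (y u))" .
    have "\<forall>i\<in>S. A e i \<in> R \<and> y i \<in> G" using y entries e(1) by blast
    then show ?thesis
      using zero_in_row_sum_cancelling_pair[OF fin _ uv cancel e(2)] True by blast
  next
    case False
    have "row_sum B x (S - {v}) j \<subseteq> row_sum A y S j"
      unfolding y_def
    proof (rule row_sum_merge_columns_subset[OF fin uvS uv(3)])
      show "B j u \<in> hadd (A j u) (hmul (A j v) lam)" using Bu j False by blast
      show "\<forall>i\<in>S - {u}. B j i = A j i" using B j False by blast
    qed (use entries j x lam(1) in auto)
    then show ?thesis using x(2) j False by blast
  qed
  then show ?thesis unfolding has_nowhere_zero_solution_def using y by blast
qed

lemma has_nowhere_zero_solution_merge_columns:
  assumes sys: "hall_system S E A" and e: "e \<in> E" "card (row_supp A S e) \<noteq> 3"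
    and IH: "\<And>S' E' B. card S' < card S \<Longrightarrow> hall_system S' E' B \<Longrightarrow> has_nowhere_zero_solution S' E' B"
  shows "has_nowhere_zero_solution S E A"
proof -
  have fin: "finite S" "finite E" and entries: "\<forall>j\<in>E. \<forall>i\<in>S. A j i \<in> R"
    and hall: "hall_surplus (row_supp A S) E"
    using sys unfolding hall_system_def by blast+
  obtain u v where uv: "u \<in> row_supp A S e" "v \<in> row_supp A S e" "u \<noteq> v"
    and pair: "\<And>J. J \<subseteq> E - {e} \<Longrightarrow> u \<in> \<Union>(row_supp A S ` J) \<Longrightarrow> v \<in> \<Union>(row_supp A S ` J) \<Longrightarrow>
                 card J + 2 \<le> card (\<Union>(row_supp A S ` J))"
    using hall_surplus_obtain_pair[OF hall fin(2) e(1)] by blast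
  have uvS: "u \<in> S" "v \<in> S" using uv row_supp_subset by blast+
  have Aeu: "A e u \<in> G" and Aev: "A e v \<in> G" using uv entries e(1) unfolding row_supp_def by auto
  obtain lam where lam: "lam \<in> G" "hmul (A e v) lam = neg (A e u)"
    using exists_mul_eq[OF Aev neg_nonzero[OF Aeu]] by blast
  have "\<forall>j\<in>E. A j u \<in> R \<and> hmul (A j v) lam \<in> R" using entries uvS lam(1) by auto
  then obtain c where c: "\<forall>j\<in>E. c j \<in> hadd (A j u) (hmul (A j v) lam) \<and> c j \<in> R \<and>
      (c j = zero \<longleftrightarrow> A j u = zero \<and> hmul (A j v) lam = zero)"
    by (rule obtain_nondegenerate_sums)
  define B where "B j i = (if i = u then c j else A j i)" for j i
  have Bu: "B j u \<in> hadd (A j u) (hmul (A j v) lam) \<and> B j u \<in> R \<and>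
      (B j u = zero \<longleftrightarrow> A j u = zero \<and> A j v = zero)" if "j \<in> E" for j
    using c that entries uvS lam(1) mul_eq_zero_iff unfolding B_def by auto
  have "hall_system (S - {v}) (E - {e}) B"
    by (rule hall_system_merge_columns[OF sys uvS uv(3) pair]) (use Bu in \<open>auto simp: B_def\<close>)
  moreover have "card (S - {v}) < card S" using fin(1) uvS(2) by (rule card_Diff1_less)
  ultimately obtain x where x: "\<forall>i\<in>S - {v}. x i \<in> G" "\<forall>j\<in>E - {e}. zero \<in> row_sum B x (S - {v}) j"
    using IH unfolding has_nowhere_zero_solution_def by blast
  show ?thesis
    by (rule has_nowhere_zero_solution_unmerge_columns[OF fin(1) entries e uv lam _ _ x])
      (use Bu in \<open>auto simp: B_def\<close>)
qed

lemma obtain_two_term_row_complement: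
  assumes fin: "finite T" and x: "\<forall>i\<in>T. A j i \<in> R \<and> x i \<in> G"
    and two: "card (row_supp A T j) = 2" and zero: "zero \<in> row_sum A x T j"
  obtains t where "t \<in> G" "\<And>g. g \<in> G \<Longrightarrow> phi g \<noteq> phi t \<Longrightarrow> g \<in> row_sum A x T j"
proof -
  let ?f = "\<lambda>i. hmul (A j i) (x i)"
  obtain a b where ab: "row_supp A T j = {a, b}" "a \<noteq> b" using two by (meson card_2_iff)
  have G2: "?f a \<in> G" "?f b \<in> G" using row_terms_nonzero[of T A j x, OF x] ab(1) by auto
  have "row_sum A x T j = row_sum A x {a, b} j"
    using row_sum_eq_row_supp[of T A j x] fin x ab(1) by auto
  also have "\<dots> = hadd (?f a) (?f b)" unfolding row_sum_def using ab(2) G2 by (intro hsum_set_doubleton) auto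
  finally have sum: "row_sum A x T j = hadd (?f a) (?f b)" .
  then have "?f b = neg (?f a)" using zero G2 by (intro neg_unique) auto
  then show thesis using that[of "?f a"] mem_add_neg[of "?f a"] G2 sum by simp
qed

lemma obtain_nonzero_proportional_values:
  assumes fin: "finite T" and xe: "\<forall>i\<in>T. A e i \<in> R \<and> x i \<in> G" and xf: "\<forall>i\<in>T. A f i \<in> R \<and> x i \<in> G"
    and two: "card (row_supp A T e) = 2" "card (row_supp A T f) = 2"
    and ab: "a \<in> G" "b \<in> G"
    and r: "r1 \<in> row_sum A x T e" "r2 \<in> row_sum A x T f" "hmul a r1 = hmul b r2"
  obtains s1 s2 where "s1 \<in> row_sum A x T e" "s2 \<in> row_sum A x T f" "s2 \<in> G" "hmul a s1 = hmul b s2"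
proof (cases "r2 = zero")
  case False
  moreover have "r2 \<in> R" using r(2) row_sum_closed[of T A f x] xf by blast
  ultimately show thesis using that r by blast
next
  case True
  have "r1 \<in> R" using r(1) row_sum_closed[of T A e x] xe by blast
  then have "r1 = zero" using r(3) True ab mul_eq_zero_iff[of a r1] by simp
  then have "zero \<in> row_sum A x T e" "zero \<in> row_sum A x T f" using r(1,2) True by simp_all
  obtain te where te: "te \<in> G" "\<And>g. g \<in> G \<Longrightarrow> phi g \<noteq> phi te \<Longrightarrow> g \<in> row_sum A x T e"
    using obtain_two_term_row_complement[OF fin xe two(1) \<open>zero \<in> row_sum A x T e\<close>] by blast
  obtain tf where tf: "tf \<in> G" "\<And>g. g \<in> G \<Longrightarrow> phi g \<noteq> phi tf \<Longrightarrow> g \<in> row_sum A x T f"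
    using obtain_two_term_row_complement[OF fin xf two(2) \<open>zero \<in> row_sum A x T f\<close>] by blast
  obtain \<rho> where \<rho>: "\<rho> \<in> G" "hmul a \<rho> = b" using exists_mul_eq[OF ab] by blast
  obtain g where g: "g \<in> G" "phi g \<noteq> phi tf" "phi (hmul \<rho> g) \<noteq> phi te"
    using exists_outside_two_classes_twisted[OF \<rho>(1)] by blast
  have "hmul a (hmul \<rho> g) = hmul b g" using \<rho> ab g(1) by (simp add: mul_assoc[symmetric])
  then show thesis using that te(2) tf(2) g mul_nonzero[OF \<rho>(1) g(1)] by blast
qed

lemma obtain_elimination_system:
  assumes sys: "hall_system S E A" and w: "w \<in> S" "e \<in> E" "f \<in> E" "e \<noteq> f"
    "\<forall>j\<in>E. A j w \<noteq> zero \<longleftrightarrow> j = e \<or> j = f" and g: "g \<notin> E"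
  obtains B where "hall_system (S - {w}) (insert g (E - {e, f})) B" "\<forall>j\<in>E. B j = A j"
    "\<forall>i\<in>S - {w}. B g i \<in> hadd (hmul (A f w) (A e i)) (neg (hmul (A e w) (A f i)))"
proof -
  have entries: "\<forall>j\<in>E. \<forall>i\<in>S. A j i \<in> R" using sys unfolding hall_system_def by blast
  have Aw: "A e w \<in> G" "A f w \<in> G" using w entries by auto
  have "\<forall>i\<in>S - {w}. hmul (A f w) (A e i) \<in> R \<and> neg (hmul (A e w) (A f i)) \<in> R"
    using entries w(2,3) Aw by auto
  then obtain c where c: "\<forall>i\<in>S - {w}. c i \<in> hadd (hmul (A f w) (A e i)) (neg (hmul (A e w) (A f i))) \<and>
      c i \<in> R \<and> (c i = zero \<longleftrightarrow> hmul (A f w) (A e i) = zero \<and> neg (hmul (A e w) (A f i)) = zero)"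
    by (rule obtain_nondegenerate_sums)
  have "\<forall>i\<in>S - {w}. (A(g := c)) g i \<in> R \<and> ((A(g := c)) g i = zero \<longleftrightarrow> A e i = zero \<and> A f i = zero)"
    using c entries w(2,3) Aw mul_eq_zero_iff by auto
  moreover have "\<forall>j\<in>E. (A(g := c)) j = A j" using g by auto
  ultimately have "hall_system (S - {w}) (insert g (E - {e, f})) (A(g := c))"
    by (rule hall_system_eliminate_column[OF sys w g])
  then show thesis using that c g by auto
qed

lemma has_nowhere_zero_solution_eliminate_column:
  assumes sys: "hall_system S E A" and three: "\<forall>j\<in>E. card (row_supp A S j) = 3"
    and w: "w \<in> S" "e \<in> E" "f \<in> E" "e \<noteq> f" "\<forall>j\<in>E. A j w \<noteq> zero \<longleftrightarrow> j = e \<or> j = f"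
    and IH: "\<And>S' E' B. card S' < card S \<Longrightarrow> hall_system S' E' B \<Longrightarrow> has_nowhere_zero_solution S' E' B"
  shows "has_nowhere_zero_solution S E A"
proof -
  have fin: "finite S" "finite E" and entries: "\<forall>j\<in>E. \<forall>i\<in>S. A j i \<in> R"
    using sys unfolding hall_system_def by blast+
  let ?T = "S - {w}"
  obtain g :: nat where g: "g \<notin> E" using ex_new_if_finite[OF infinite_UNIV_nat fin(2)] by blast
  then obtain B where B: "hall_system ?T (insert g (E - {e, f})) B" "\<forall>j\<in>E. B j = A j"
    "\<forall>i\<in>?T. B g i \<in> hadd (hmul (A f w) (A e i)) (neg (hmul (A e w) (A f i)))"
    using obtain_elimination_system[OF sys w] by blast
  have "card ?T < card S" using fin(1) w(1) by (rule card_Diff1_less)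
  then obtain x where x: "\<forall>i\<in>?T. x i \<in> G" "\<forall>j\<in>insert g (E - {e, f}). zero \<in> row_sum B x ?T j"
    using IH B(1) unfolding has_nowhere_zero_solution_def by blast
  have xe: "\<forall>i\<in>?T. A e i \<in> R \<and> x i \<in> G" and xf: "\<forall>i\<in>?T. A f i \<in> R \<and> x i \<in> G"
    using x(1) entries w(2,3) by auto
  have Aw: "A e w \<in> G" "A f w \<in> G" using w entries by auto
  have finT: "finite ?T" using fin(1) by simp
  have "\<forall>i\<in>?T. A e i \<in> R \<and> A f i \<in> R \<and> x i \<in> R" using xe xf by blast
  then obtain r1 r2 where r: "r1 \<in> row_sum A x ?T e" "r2 \<in> row_sum A x ?T f"
    "hmul (A f w) r1 = hmul (A e w) r2"
    using obtain_proportional_row_values[of ?T "A f w" "A e w" A e f x B g] finT B(3) x(2) Aw by blast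
  have two: "card (row_supp A ?T j) = 2" if "j \<in> {e, f}" for j
  proof -
    have "row_supp A ?T j = row_supp A S j - {w}" unfolding row_supp_def by auto
    moreover have "w \<in> row_supp A S j" using w that unfolding row_supp_def by auto
    moreover have "card (row_supp A S j) = 3" using three that w(2,3) by blast
    ultimately show ?thesis using fin(1) by (simp add: finite_subset[OF row_supp_subset])
  qed
  obtain s1 s2 where s: "s1 \<in> row_sum A x ?T e" "s2 \<in> row_sum A x ?T f" "s2 \<in> G"
    "hmul (A f w) s1 = hmul (A e w) s2"
    using obtain_nonzero_proportional_values[OF finT xe xf two[of e] two[of f] Aw(2,1) r] by blast
  have "zero \<in> row_sum A x ?T j" if "j \<in> E - {e, f}" for j
    using x(2) that B(2) unfolding row_sum_def by auto
  then show ?thesis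
    using has_nowhere_zero_solution_of_proportional_values[OF fin(1) entries w(1-3,5) x(1) _ s] by blast
qed

theorem hall_system_has_nowhere_zero_solution:
  "hall_system S E A \<Longrightarrow> has_nowhere_zero_solution S E A"
proof (induction "card S" arbitrary: S E A rule: less_induct)
  case less
  have IH: "\<And>S' E' B. card S' < card S \<Longrightarrow> hall_system S' E' B \<Longrightarrow> has_nowhere_zero_solution S' E' B"
    using less.hyps by blast
  note sys = less.prems
  show ?case
  proof (cases "E = {}")
    case True
    then show ?thesis
      unfolding has_nowhere_zero_solution_def using unit_nonzero by (intro exI[of _ "\<lambda>_. unit"]) simp
  next
    case E: False
    show ?thesis
    proof (cases "\<exists>w\<in>S. \<forall>j\<in>E. A j w = zero")
      case True
      then show ?thesis using has_nowhere_zero_solution_zero_column[OF sys _ _ IH] by blast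
    next
      case no_zero_column: False
      show ?thesis
      proof (cases "\<exists>w\<in>S. \<exists>e\<in>E. \<forall>j\<in>E. A j w \<noteq> zero \<longleftrightarrow> j = e")
        case True
        then show ?thesis using has_nowhere_zero_solution_single_row_column[OF sys _ _ _ IH] by blast
      next
        case no_single_row: False
        show ?thesis
        proof (cases "\<exists>e\<in>E. card (row_supp A S e) \<noteq> 3")
          case True
          then show ?thesis using has_nowhere_zero_solution_merge_columns[OF sys _ _ IH] by blast
        next
          case False
          then have three: "\<forall>j\<in>E. card (row_supp A S j) = 3" by blast
          have "\<forall>w\<in>S. \<exists>j\<in>E. A j w \<noteq> zero" using no_zero_column by blast
          then obtain w e f where "w \<in> S" "e \<in> E" "f \<in> E" "e \<noteq> f"
            "\<forall>j\<in>E. A j w \<noteq> zero \<longleftrightarrow> j = e \<or> j = f"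
            using exists_column_in_two_rows[OF sys E three] no_single_row by blast
          then show ?thesis using has_nowhere_zero_solution_eliminate_column[OF sys three _ _ _ _ _ IH] by blast
        qed
      qed
    qed
  qed
qed

theorem has_FETVINS: "FETVINS R hadd hmul zero"
  unfolding FETVINS_def
proof (intro allI impI)
  fix k n :: nat and A :: "nat \<Rightarrow> nat \<Rightarrow> 'a"
  assume "k < n" and entries: "\<forall>j<k. \<forall>i<n. A j i \<in> R"
  obtain S where S: "S \<subseteq> {..<n}" "S \<noteq> {}"
    and sys: "hall_system S {j\<in>{..<k}. row_supp A S j \<noteq> {}} A"
    using obtain_hall_subsystem[OF \<open>k < n\<close> entries] by blast
  then obtain x where x: "\<forall>i\<in>S. x i \<in> G" "\<forall>j\<in>{j\<in>{..<k}. row_supp A S j \<noteq> {}}. zero \<in> row_sum A x S j"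
    using hall_system_has_nowhere_zero_solution unfolding has_nowhere_zero_solution_def by blast
  define y where "y i = (if i \<in> S then x i else zero)" for i
  have "zero \<in> lin_form hadd hmul zero n (A j) y" if "j < k" for j
  proof -
    have "lin_form hadd hmul zero n (A j) y = row_sum A x S j"
      unfolding y_def using S(1) entries that x(1) by (intro lin_form_extend_by_zero) auto
    moreover have "zero \<in> row_sum A x S j"
    proof (cases "row_supp A S j = {}")
      case True
      have "row_sum A x S j = {zero}"
        using S(1) entries that x(1) finite_subset[OF S(1)] True by (intro row_sum_empty_row_supp) auto
      then show ?thesis by simp
    next
      case False
      then show ?thesis using x(2) that by blast
    qed
    ultimately show ?thesis by simp
  qed
  moreover have "\<forall>i<n. y i \<in> R" using x(1) unfolding y_def by auto
  moreover have "\<exists>i<n. y i \<noteq> zero"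
  proof -
    obtain i where "i \<in> S" using S(2) by blast
    then show ?thesis using S(1) x(1) unfolding y_def by auto
  qed
  ultimately show "\<exists>x. (\<forall>i<n. x i \<in> R) \<and> (\<exists>i<n. x i \<noteq> zero) \<and>
      (\<forall>j<k. zero \<in> lin_form hadd hmul zero n (A j) x)"
    by blast
qed

end

theorem mainTheorem1:
  fixes R :: "'a set" and hadd :: "'a \<Rightarrow> 'a \<Rightarrow> 'a set" and hmul :: "'a \<Rightarrow> 'a \<Rightarrow> 'a"
    and zero unit :: 'a and H :: "('b, 'c) monoid_scheme" and phi :: "'a \<Rightarrow> 'b"
  assumes "massouros R hadd hmul zero unit H phi"
  shows "FETVINS R hadd hmul zero"
proof -
  interpret massouros_hyperfield R hadd hmul zero unit H phi by (rule massouros_hyperfield.intro) (rule assms)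
  show ?thesis by (rule has_FETVINS)
qed

end
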